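(* Let $(W,S)$ be the Coxeter system of type $A_\infty^{\langle1\rangle}$: $S=\{s_i\mid i\ge1\}$, $m(s_i,s_{i+1})=3$, and $m(s_i,s_j)=2$ for $|i-j|\ge2$. Write $\alpha_i=\alpha_{s_i}$, let $\beta_i=\alpha_{2i-1}+\alpha_{2i}$ (a positive root) for $i\ge1$, let $X=\{s_{\beta_i}\mid i\ge1\}$ (so $s_{\beta_i}=s_{2i-1}s_{2i}s_{2i-1}$) and $G=\langle X\rangle$. Then: $S(G)=X$ and $(G,X)$ is a Coxeter system of type $A_\infty^{\langle1\rangle}$ (in particular irreducible); $G$ is not a parabolic subgroup of $W$; for each $i\ge1$ the subgroup $G_i=\langle\{s_{\beta_j}\mid 1\le j\le i\}\cup\{s_k\mid k\ge 2i+1\}\rangle$ is a parabolic subgroup of $W$ containing $G$, with $G_1\supsetneq G_2\supsetneq\cdots$ and $\bigcap_{i\ge1}G_i=G$; and consequently the parabolic closure satisfies $P(X)=G$, which is not a parabolic subgroup.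
   Context: Geometric representation: $V$ with basis $\{\alpha_s\}$, root system $\Phi=W\cdot\{\alpha_s\}$, reflection $s_\gamma$ for $\gamma\in\Phi$. For a reflection subgroup $G$, $S(G)=\{s_\gamma\mid\gamma\in\Pi(G)\}$ where $\Pi(G)$ is the set of positive roots $\gamma$ with $s_\gamma\in G$ not expressible as a positive linear combination of other positive roots $\beta$ with $s_\beta\in G$; $(G,S(G))$ is a Coxeter system. A parabolic subgroup is a conjugate $wW_Iw^{-1}$ of $W_I=\langle I\rangle$, $I\subseteq S$. The parabolic closure $P(X)$ is the intersection of all parabolic subgroups containing $X$. *)

theory Defs
  imports "HOL-Algebra.Algebra"
begin

text \<open>(G,S) is a Coxeter system: S is a generating set of involutions of the group G and
G has the presentation  < S | (s t)^m(s,t) = 1 >  where m(s,t) is the order of s t in G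
(no relation when the order is infinite).  The presentation is expressed by its universal
property: every map of S into a group H respecting these relations extends to a
homomorphism.  The type of the target groups H is given by the itself-argument; in the
main theorem it is a free (hence universally quantified) type variable.\<close>

definition coxeter_system :: "'h itself \<Rightarrow> ('a, 'b) monoid_scheme \<Rightarrow> 'a set \<Rightarrow> bool" where
  "coxeter_system _ G S \<longleftrightarrow>
     group G \<and> S \<subseteq> carrier G \<and> generate G S = carrier G \<and>
     (\<forall>s\<in>S. s \<noteq> \<one>\<^bsub>G\<^esub> \<and> s \<otimes>\<^bsub>G\<^esub> s = \<one>\<^bsub>G\<^esub>) \<and>
     (\<forall>(H :: 'h monoid) \<phi>. group H \<and> \<phi> \<in> S \<rightarrow> carrier H \<and>
        (\<forall>s\<in>S. \<forall>t\<in>S. \<forall>n::nat.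
            (s \<otimes>\<^bsub>G\<^esub> t) [^]\<^bsub>G\<^esub> n = \<one>\<^bsub>G\<^esub> \<longrightarrow>
            (\<phi> s \<otimes>\<^bsub>H\<^esub> \<phi> t) [^]\<^bsub>H\<^esub> n = \<one>\<^bsub>H\<^esub>)
      \<longrightarrow> (\<exists>h \<in> hom G H. \<forall>s\<in>S. h s = \<phi> s))"

definition mA :: "nat \<Rightarrow> nat \<Rightarrow> nat" where
  "mA i j = (if i = j then 1 else if i = j + 1 \<or> j = i + 1 then 3 else 2)"

definition coxeter_system_A_inf :: "'h itself \<Rightarrow> ('a, 'b) monoid_scheme \<Rightarrow> 'a set \<Rightarrow> bool" where
  "coxeter_system_A_inf T G S \<longleftrightarrow> coxeter_system T G S \<and>
     (\<exists>e. bij_betw e {1..} S \<and>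
          (\<forall>i\<ge>1. \<forall>j\<ge>1. group.ord G (e i \<otimes>\<^bsub>G\<^esub> e j) = mA i j))"

text \<open>V has basis alpha_i (i >= 1); vectors are modelled as functions nat => real
(coordinate 0 is unused).  The bilinear form is B(alpha_i,alpha_i)=1,
B(alpha_i,alpha_{i+1}) = -1/2 = -cos(pi/3), and 0 otherwise.\<close>

type_synonym vec = "nat \<Rightarrow> real"
type_synonym lmap = "vec \<Rightarrow> vec"

definition alpha :: "nat \<Rightarrow> vec" where
  "alpha i = (\<lambda>k. if k = i then 1 else 0)"

definition Bsimple :: "nat \<Rightarrow> vec \<Rightarrow> real" where
  "Bsimple i v = v i - (if i \<ge> 2 then v (i - 1) else 0) / 2 - v (i + 1) / 2"

text \<open>B(u, v) for finitely supported u.\<close>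
definition Bform :: "vec \<Rightarrow> vec \<Rightarrow> real" where
  "Bform u v = (\<Sum>i\<in>{i. u i \<noteq> 0}. u i * Bsimple i v)"

definition sref :: "vec \<Rightarrow> lmap" where
  "sref \<gamma> v = (\<lambda>k. v k - 2 * Bform \<gamma> v * \<gamma> k)"

definition s :: "nat \<Rightarrow> lmap" where
  "s i = sref (alpha i)"

definition Sgen :: "lmap set" where
  "Sgen = {s i | i. i \<ge> 1}"

text \<open>W = the group of linear maps generated by the simple reflections (the geometric
representation is faithful, so this is W).\<close>
inductive_set Wset :: "lmap set" where
  Wid: "id \<in> Wset"
| Wstep: "w \<in> Wset \<Longrightarrow> i \<ge> 1 \<Longrightarrow> s i \<circ> w \<in> Wset"

definition Wgrp :: "lmap monoid" where
  "Wgrp = \<lparr>carrier = Wset, monoid.mult = (\<circ>), one = id\<rparr>"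

definition genW :: "lmap set \<Rightarrow> lmap set" where
  "genW Y = generate Wgrp Y"

definition Phi :: "vec set" where
  "Phi = {w (alpha i) | w i. w \<in> Wset \<and> i \<ge> 1}"

definition Phi_pos :: "vec set" where
  "Phi_pos = {\<gamma> \<in> Phi. \<forall>k. \<gamma> k \<ge> 0}"

definition Pi_of :: "lmap set \<Rightarrow> vec set" where
  "Pi_of G = {\<gamma> \<in> Phi_pos. sref \<gamma> \<in> G \<and>
      \<not> (\<exists>F c. finite F \<and> F \<noteq> {} \<and>
             F \<subseteq> {\<beta> \<in> Phi_pos. sref \<beta> \<in> G \<and> \<beta> \<noteq> \<gamma>} \<and>
             (\<forall>\<beta>\<in>F. c \<beta> > (0::real)) \<and>
             (\<forall>k. \<gamma> k = (\<Sum>\<beta>\<in>F. c \<beta> * \<beta> k)))}"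

definition S_of :: "lmap set \<Rightarrow> lmap set" where
  "S_of G = sref ` Pi_of G"

definition parabolic :: "lmap set \<Rightarrow> bool" where
  "parabolic H \<longleftrightarrow> (\<exists>w\<in>Wset. \<exists>I. I \<subseteq> Sgen \<and>
      H = {w \<circ> u \<circ> inv\<^bsub>Wgrp\<^esub> w | u. u \<in> genW I})"

definition parabolic_closure :: "lmap set \<Rightarrow> lmap set" where
  "parabolic_closure Y = \<Inter>{H. parabolic H \<and> Y \<subseteq> H}"

definition beta :: "nat \<Rightarrow> vec" where
  "beta i = (\<lambda>k. alpha (2*i - 1) k + alpha (2*i) k)"

definition Xset :: "lmap set" where
  "Xset = {sref (beta i) | i. i \<ge> 1}"

definition Gsub :: "nat \<Rightarrow> lmap set" where
  "Gsub i = genW ({sref (beta j) | j. 1 \<le> j \<and> j \<le> i} \<union> {s k | k. k \<ge> 2*i + 1})"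

end

theory Submission
  imports Defs "HOL-Combinatorics.Permutations"
begin

text \<open>
  Write \<open>\<alpha>\<^sub>i = \<epsilon>\<^sub>i - \<epsilon>\<^sub>i\<^sub>+\<^sub>1\<close>. In the \<open>\<epsilon>\<close>-coordinates the geometric
  representation of \<open>W\<close> becomes the action of the finitary symmetric group of
  \<open>{1, 2, \<dots>}\<close> by permuting coordinates: \<open>s\<^sub>i\<close> is the transposition \<open>(i i+1)\<close>, the
  positive roots are the \<open>\<epsilon>\<^sub>a - \<epsilon>\<^sub>c\<close> with \<open>a < c\<close>, and their reflections are the
  transpositions \<open>(a c)\<close>. Hence \<open>\<beta>\<^sub>i = \<epsilon>\<^sub>2\<^sub>i\<^sub>-\<^sub>1 - \<epsilon>\<^sub>2\<^sub>i\<^sub>+\<^sub>1\<close> and \<open>G\<close> is the finitary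
  symmetric group of the odd numbers, which after relabelling \<open>2i - 1 \<mapsto> i\<close> is again
  of type \<open>A\<^sub>\<infinity>\<close>. The reflections of \<open>G\<close> are the \<open>(a c)\<close> with \<open>a, c\<close> odd, and
  \<open>\<epsilon>\<^sub>a - \<epsilon>\<^sub>c\<close> is the sum of the \<open>\<beta>\<close>'s between \<open>a\<close> and \<open>c\<close>, so only the \<open>\<beta>\<^sub>i\<close> are
  canonical roots.

  \<open>G\<^sub>i\<close> is the conjugate of the standard parabolic subgroup \<open>\<langle>s\<^sub>k | k > i\<rangle>\<close> by a
  permutation sending \<open>i+1, \<dots>, 2i\<close> to the odd and \<open>1, \<dots>, i\<close> to the even numbers
  of \<open>{1, \<dots>, 2i}\<close>. It fixes \<open>\<epsilon>\<^sub>2, \<dots>, \<epsilon>\<^sub>2\<^sub>i\<close>, so \<open>\<Inter> G\<^sub>i\<close> consists of the permutations fixing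
  all even numbers, which is \<open>G\<close>. No conjugate \<open>w W\<^sub>I w\<^sup>-\<^sup>1\<close> equals \<open>G\<close>: either \<open>I\<close>
  contains some \<open>s\<^sub>k\<close> with \<open>k\<close> beyond the support of \<open>w\<close>, and its conjugate moves an
  even coordinate, or the conjugate fixes all \<open>\<epsilon>\<^sub>m\<close> with \<open>m\<close> large, while \<open>G\<close> contains
  every \<open>s\<^sub>\<beta>\<^sub>j\<close>.
\<close>

section \<open>The geometric representation in \<open>\<epsilon>\<close>-coordinates\<close>

text \<open>
  \<open>dcoord v j\<close> is the coefficient of \<open>\<epsilon>\<^sub>j\<close> in \<open>v = \<Sum> v\<^sub>i \<alpha>\<^sub>i\<close>, and \<open>eps k\<close> is the
  (not finitely supported) vector \<open>\<Sum>\<^sub>j\<^sub>\<ge>\<^sub>k \<alpha>\<^sub>j\<close>, which plays the role of \<open>\<epsilon>\<^sub>k\<close>.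
  Coordinate \<open>0\<close> is unused throughout.
\<close>

definition dcoord :: "vec \<Rightarrow> nat \<Rightarrow> real" where
  "dcoord v j = v j - (if j \<ge> 2 then v (j - 1) else 0)"

definition eps :: "nat \<Rightarrow> vec" where
  "eps k = (\<lambda>j. if k \<le> j then 1 else 0)"

definition eps_diff :: "nat \<Rightarrow> nat \<Rightarrow> vec" where
  "eps_diff a c = (\<lambda>j. eps a j - eps c j)"

text \<open>\<open>perm_act p\<close> replaces the \<open>\<epsilon>\<^sub>j\<close>-coordinate by the \<open>\<epsilon>\<^sub>p\<^sub>(\<^sub>j\<^sub>)\<close>-coordinate;
  this is a right action.\<close>

definition perm_act :: "(nat \<Rightarrow> nat) \<Rightarrow> lmap" where
  "perm_act p v = (\<lambda>k. if k = 0 then v 0 else (\<Sum>j\<in>{1..k}. dcoord v (p j)))"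

definition pos_preserving :: "(nat \<Rightarrow> nat) \<Rightarrow> bool" where
  "pos_preserving q \<longleftrightarrow> (\<forall>j\<ge>1. q j \<ge> 1)"

lemma sum_dcoord: "k \<ge> 1 \<Longrightarrow> (\<Sum>j\<in>{1..k}. dcoord v j) = v k"
proof (induction k)
  case (Suc k)
  then show ?case
    by (cases "k = 0") (simp_all add: dcoord_def sum.cl_ivl_Suc)
qed simp

lemma dcoord_perm_act: "j \<ge> 1 \<Longrightarrow> dcoord (perm_act p v) j = dcoord v (p j)"
  by (cases j) (auto simp: dcoord_def perm_act_def sum.cl_ivl_Suc)

lemma perm_act_0 [simp]: "perm_act p v 0 = v 0"
  by (simp add: perm_act_def)

lemma perm_act_comp: "pos_preserving q \<Longrightarrow> perm_act (p \<circ> q) = perm_act q \<circ> perm_act p"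
  by (simp add: fun_eq_iff perm_act_def[of q] perm_act_def[of "p \<circ> q"] dcoord_perm_act
      pos_preserving_def)

lemma perm_act_id: "perm_act id = id"
  using sum_dcoord by (auto simp: fun_eq_iff perm_act_def)

lemma perm_act_inj:
  assumes "p 0 = 0" "q 0 = 0" "perm_act p = perm_act q"
  shows "p = q"
proof
  fix j
  define w :: vec where "w = (\<lambda>k. \<Sum>i\<in>{1..k}. real i)"
  have dcoord_w: "dcoord w i = real i" for i
    by (cases i) (auto simp: dcoord_def w_def sum.cl_ivl_Suc)
  have "dcoord (perm_act p w) j = dcoord (perm_act q w) j"
    using assms(3) by simp
  then show "p j = q j"
    using assms(1,2) by (cases "j = 0") (simp_all add: dcoord_perm_act dcoord_w)
qed

lemma perm_act_eq_id_iff: "q 0 = 0 \<Longrightarrow> perm_act q = id \<longleftrightarrow> q = id"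
  using perm_act_inj[of q id] perm_act_id by auto

lemma dcoord_eps: "k \<ge> 1 \<Longrightarrow> dcoord (eps k) j = (if j = k then 1 else 0)"
  by (auto simp: dcoord_def eps_def)

lemma eps_inj: "a \<ge> 1 \<Longrightarrow> b \<ge> 1 \<Longrightarrow> eps a = eps b \<Longrightarrow> a = b"
  using dcoord_eps[of a a] dcoord_eps[of b a] by (metis zero_neq_one)

lemma perm_act_eps:
  assumes "bij p" "p 0 = 0" "k \<ge> 1"
  shows "perm_act p (eps k) = eps (Hilbert_Choice.inv p k)"
proof -
  have ik: "Hilbert_Choice.inv p k \<noteq> 0"
    using assms by (metis bij_inv_eq_iff not_one_le_zero)
  have "(\<Sum>j\<in>{1..m}. dcoord (eps k) (p j)) = (if Hilbert_Choice.inv p k \<in> {1..m} then 1 else 0)"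
    for m
  proof -
    have "(\<Sum>j\<in>{1..m}. dcoord (eps k) (p j)) =
        (\<Sum>j\<in>{1..m}. if j = Hilbert_Choice.inv p k then 1 else 0)"
      using assms by (intro sum.cong) (auto simp: dcoord_eps bij_inv_eq_iff)
    then show ?thesis by (simp add: sum.delta)
  qed
  then show ?thesis
    using assms ik by (auto simp: fun_eq_iff perm_act_def eps_def)
qed

lemma perm_act_transpose_eps:
  "1 \<le> a \<Longrightarrow> 1 \<le> b \<Longrightarrow> k \<ge> 1 \<Longrightarrow> perm_act (transpose a b) (eps k) = eps (transpose a b k)"
  by (subst perm_act_eps) (auto simp: transpose_def)

lemma perm_act_eps_diff:
  assumes "bij p" "p 0 = 0" "a \<ge> 1" "c \<ge> 1"
  shows "perm_act p (eps_diff a c) = eps_diff (Hilbert_Choice.inv p a) (Hilbert_Choice.inv p c)"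
proof -
  have "dcoord (\<lambda>j. u j - w j) i = dcoord u i - dcoord w i" for u w i
    by (simp add: dcoord_def)
  then have "perm_act p (\<lambda>j. u j - w j) = (\<lambda>j. perm_act p u j - perm_act p w j)" for u w
    by (simp add: fun_eq_iff perm_act_def sum_subtractf)
  then show ?thesis
    using assms by (simp add: eps_diff_def perm_act_eps)
qed

lemma Bform_eps_diff:
  assumes "1 \<le> a" "a < c"
  shows "Bform (eps_diff a c) v = (dcoord v a - dcoord v c) / 2"
proof -
  have support: "{k. eps_diff a c k \<noteq> 0} = {a..<c}"
    using assms by (auto simp: eps_diff_def eps_def)
  have "Bform (eps_diff a c) v = (\<Sum>j\<in>{a..<c}. Bsimple j v)"
    unfolding Bform_def support by (intro sum.cong) (auto simp: eps_diff_def eps_def)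
  also have "\<dots> = (\<Sum>j\<in>{a..<c}. dcoord v j - dcoord v (Suc j)) / 2"
    using assms by (auto simp: sum_divide_distrib Bsimple_def dcoord_def intro!: sum.cong)
  also have "(\<Sum>j\<in>{a..<c}. dcoord v j - dcoord v (Suc j)) = dcoord v a - dcoord v c"
    using sum_Suc_diff'[of a c "\<lambda>j. - dcoord v j"] assms by simp
  finally show ?thesis .
qed

lemma sum_transpose_partial:
  fixes f :: "nat \<Rightarrow> real"
  assumes "1 \<le> a" "a \<le> k" "k < c"
  shows "(\<Sum>j\<in>{1..k}. f (transpose a c j)) = (\<Sum>j\<in>{1..k}. f j) + (f c - f a)"
proof -
  have "(\<Sum>j\<in>{1..k}. f (transpose a c j)) = (\<Sum>j\<in>{1..k}. f j + (if j = a then f c - f a else 0))"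
    using assms(3) by (intro sum.cong) (auto simp: transpose_def)
  then show ?thesis
    using assms by (simp add: sum.distrib sum.delta)
qed

lemma sref_eps_diff:
  assumes "1 \<le> a" "a < c"
  shows "sref (eps_diff a c) = perm_act (transpose a c)"
proof (intro ext)
  fix v k
  have B: "Bform (eps_diff a c) v = (dcoord v a - dcoord v c) / 2"
    using Bform_eps_diff assms by simp
  consider "k = 0" | "1 \<le> k" "k < a" | "a \<le> k" "k < c" | "c \<le> k" "1 \<le> k"
    by linarith
  then show "sref (eps_diff a c) v k = perm_act (transpose a c) v k"
  proof cases
    case 2
    then have "(\<Sum>j\<in>{1..k}. dcoord v (transpose a c j)) = (\<Sum>j\<in>{1..k}. dcoord v j)"
      using assms by (intro sum.cong) auto
    then show ?thesis
      using 2 assms sum_dcoord[of k v] by (simp add: sref_def perm_act_def eps_diff_def eps_def)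
  next
    case 3
    then have "(\<Sum>j\<in>{1..k}. dcoord v (transpose a c j)) = v k + (dcoord v c - dcoord v a)"
      using assms sum_transpose_partial[of a k c "dcoord v"] sum_dcoord[of k v] by simp
    moreover have "eps_diff a c k = 1"
      using 3 by (simp add: eps_diff_def eps_def)
    ultimately show ?thesis
      using 3 assms by (simp add: sref_def perm_act_def B field_simps)
  next
    case 4
    have "transpose a c permutes {1..k}"
      using 4 assms by (intro permutes_swap_id) auto
    from sum.permute[OF this, of "dcoord v"]
    have "(\<Sum>j\<in>{1..k}. dcoord v (transpose a c j)) = v k"
      using sum_dcoord[of k v] 4 by (simp add: comp_def)
    then show ?thesis
      using 4 assms by (simp add: sref_def perm_act_def eps_diff_def eps_def)
  qed (use assms in \<open>simp add: sref_def perm_act_def eps_diff_def eps_def\<close>)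
qed

lemma alpha_eq_eps_diff: "i \<ge> 1 \<Longrightarrow> alpha i = eps_diff i (Suc i)"
  by (auto simp: alpha_def eps_diff_def eps_def)

lemma s_eq_perm_act: "i \<ge> 1 \<Longrightarrow> s i = perm_act (transpose i (Suc i))"
  by (simp add: s_def alpha_eq_eps_diff sref_eps_diff)

lemma beta_eq_eps_diff: "i \<ge> 1 \<Longrightarrow> beta i = eps_diff (2*i - 1) (2*i + 1)"
  by (auto simp: fun_eq_iff beta_def alpha_def eps_diff_def eps_def)

definition tbeta :: "nat \<Rightarrow> nat \<Rightarrow> nat" where
  "tbeta i = transpose (2*i - 1) (2*i + 1)"

lemma sref_beta: "i \<ge> 1 \<Longrightarrow> sref (beta i) = perm_act (tbeta i)"
  by (simp add: beta_eq_eps_diff sref_eps_diff tbeta_def)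

section \<open>\<open>W\<close> is the finitary symmetric group\<close>

lemma pos_preserving_transpose: "a \<ge> 1 \<Longrightarrow> b \<ge> 1 \<Longrightarrow> pos_preserving (transpose a b)"
  by (auto simp: pos_preserving_def transpose_def)

lemma pos_preserving_permutes: "p permutes {1..n} \<Longrightarrow> pos_preserving p"
  unfolding pos_preserving_def by (metis atLeastAtMost_iff permutes_in_image permutes_not_in)

lemma pos_preserving_comp: "pos_preserving a \<Longrightarrow> pos_preserving b \<Longrightarrow> pos_preserving (a \<circ> b)"
  by (simp add: pos_preserving_def)

lemma permutes_atLeast1_0: "p permutes {1..(n::nat)} \<Longrightarrow> p 0 = 0"
  by (rule permutes_not_in) auto

definition finperm :: "(nat \<Rightarrow> nat) \<Rightarrow> bool" where
  "finperm p \<longleftrightarrow> (\<exists>n. p permutes {1..n})"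

lemma finperm_common_bound:
  assumes "finperm p" "finperm q"
  obtains n where "p permutes {1..n}" "q permutes {1..n}"
proof -
  obtain n1 n2 where "p permutes {1..n1}" "q permutes {1..n2}"
    using assms by (auto simp: finperm_def)
  then have "p permutes {1..max n1 n2}" "q permutes {1..max n1 n2}"
    by (meson atLeastatMost_subset_iff max.cobounded1 max.cobounded2 order_refl permutes_subset)+
  then show ?thesis
    using that by blast
qed

lemma finperm_comp: "finperm p \<Longrightarrow> finperm q \<Longrightarrow> finperm (p \<circ> q)"
  unfolding finperm_def[of "p \<circ> q"] by (blast elim: finperm_common_bound intro: permutes_compose)

lemma s_invol: "i \<ge> 1 \<Longrightarrow> s i \<circ> s i = id"
  using perm_act_comp[OF pos_preserving_transpose[of i "Suc i"], of "transpose i (Suc i)"]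
  by (simp add: s_eq_perm_act perm_act_id)

lemma s_in_W: "i \<ge> 1 \<Longrightarrow> s i \<in> Wset"
  using Wset.Wstep[OF Wset.Wid, of i] by simp

lemma Sgen_subset_W: "Sgen \<subseteq> Wset"
  using s_in_W by (auto simp: Sgen_def)

lemma W_comp_closed: "w1 \<in> Wset \<Longrightarrow> w2 \<in> Wset \<Longrightarrow> w1 \<circ> w2 \<in> Wset"
  by (induction w1 rule: Wset.induct) (auto simp: comp_assoc intro: Wset.Wstep)

lemma W_has_inverse: "w \<in> Wset \<Longrightarrow> \<exists>w'\<in>Wset. w' \<circ> w = id"
proof (induction w rule: Wset.induct)
  case (Wstep w i)
  then obtain w' where "w' \<in> Wset" "w' \<circ> w = id"
    by blast
  moreover have "(w' \<circ> s i) \<circ> (s i \<circ> w) = w' \<circ> (s i \<circ> s i) \<circ> w"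
    by (simp add: comp_assoc)
  ultimately have "w' \<circ> s i \<in> Wset" "(w' \<circ> s i) \<circ> (s i \<circ> w) = id"
    using Wstep.hyps(2) s_invol W_comp_closed s_in_W by auto
  then show ?case by blast
qed (metis Wset.Wid id_comp)

lemma Wgrp_simps [simp]:
  "carrier Wgrp = Wset" "x \<otimes>\<^bsub>Wgrp\<^esub> y = x \<circ> y" "\<one>\<^bsub>Wgrp\<^esub> = id"
  by (simp_all add: Wgrp_def)

lemma group_Wgrp: "group Wgrp"
  by (rule groupI) (auto simp: W_comp_closed Wset.Wid comp_assoc W_has_inverse)

lemma W_inv_eqI: "w \<in> Wset \<Longrightarrow> w' \<in> Wset \<Longrightarrow> w' \<circ> w = id \<Longrightarrow> inv\<^bsub>Wgrp\<^esub> w = w'"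
  using group.inv_equality[OF group_Wgrp, of w' w] by simp

lemma W_inv:
  assumes "w \<in> Wset"
  shows "inv\<^bsub>Wgrp\<^esub> w \<in> Wset" "inv\<^bsub>Wgrp\<^esub> w \<circ> w = id"
  using group.inv_closed[OF group_Wgrp] group.l_inv[OF group_Wgrp] assms by simp_all

lemma W_eq_perm_act: "w \<in> Wset \<Longrightarrow> \<exists>p n. p permutes {1..n} \<and> w = perm_act p"
proof (induction w rule: Wset.induct)
  case Wid
  then show ?case using perm_act_id by (metis permutes_id)
next
  case (Wstep w i)
  then obtain p n where p: "p permutes {1..n}" "w = perm_act p"
    by auto
  define m where "m = max n (Suc i)"
  have "p permutes {1..m}"
    using p(1) by (rule permutes_subset) (auto simp: m_def)
  moreover have "transpose i (Suc i) permutes {1..m}"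
    using Wstep(2) by (intro permutes_swap_id) (auto simp: m_def)
  moreover have "s i \<circ> w = perm_act (p \<circ> transpose i (Suc i))"
    using Wstep(2) p(2) by (simp add: s_eq_perm_act perm_act_comp pos_preserving_transpose)
  ultimately show ?case
    by (blast intro: permutes_compose)
qed

lemma perm_act_transpose_in_W:
  assumes "1 \<le> a" "a < b"
  shows "perm_act (transpose a b) \<in> Wset"
  using assms
proof (induction "b - a" arbitrary: a rule: less_induct)
  case less
  show ?case
  proof (cases "b = Suc a")
    case False
    then have ab: "Suc a < b"
      using less by simp
    have "transpose a b = transpose a (Suc a) \<circ> transpose (Suc a) b \<circ> transpose a (Suc a)"
      using ab by (simp add: transpose_comp_triple)
    then have "perm_act (transpose a b) = s a \<circ> perm_act (transpose (Suc a) b) \<circ> s a"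
      using less ab by (simp add: perm_act_comp pos_preserving_transpose s_eq_perm_act o_assoc)
    moreover have "perm_act (transpose (Suc a) b) \<in> Wset"
      using less ab by (intro less.hyps) auto
    ultimately show ?thesis
      using s_in_W less W_comp_closed by simp
  qed (use less s_in_W s_eq_perm_act in simp)
qed

lemma perm_act_in_W:
  assumes "p permutes {1..n}"
  shows "perm_act p \<in> Wset"
  using assms finite_atLeastAtMost[of 1 n]
proof (induction rule: permutes_induct)
  case id
  then show ?case by (metis perm_act_id Wset.Wid)
next
  case (swap a b p)
  have "perm_act (transpose a b) \<in> Wset"
    using swap perm_act_transpose_in_W[of a b] perm_act_transpose_in_W[of b a]
    by (cases a b rule: linorder_cases) (auto simp: transpose_commute)
  moreover have "perm_act (transpose a b \<circ> p) = perm_act p \<circ> perm_act (transpose a b)"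
    using swap pos_preserving_permutes by (simp add: perm_act_comp)
  ultimately show ?case
    using swap W_comp_closed by metis
qed

lemma perm_act_eps_permutes:
  "p permutes {1..n} \<Longrightarrow> k \<ge> 1 \<Longrightarrow> perm_act p (eps k) = eps (Hilbert_Choice.inv p k)"
  by (rule perm_act_eps[OF permutes_bij permutes_atLeast1_0])

lemma perm_act_fixes_eps:
  assumes "q permutes {1..n}" "k \<ge> 1" "perm_act q (eps k) = eps k"
  shows "q k = k"
proof -
  have "Hilbert_Choice.inv q k \<ge> 1"
    using pos_preserving_permutes[OF permutes_inv[OF assms(1)]] assms(2)
    by (simp add: pos_preserving_def)
  then have "Hilbert_Choice.inv q k = k"
    using eps_inj assms perm_act_eps_permutes by metis
  then show ?thesis
    using assms(1) by (simp add: permutes_inv_eq)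
qed

lemma W_fixes_large_eps: "w \<in> Wset \<Longrightarrow> \<exists>N. \<forall>k>N. w (eps k) = eps k"
proof -
  assume "w \<in> Wset"
  then obtain p n where p: "p permutes {1..n}" "w = perm_act p"
    using W_eq_perm_act by blast
  then have "Hilbert_Choice.inv p k = k" if "k > n" for k
    using that permutes_inv[OF p(1)] by (simp add: permutes_not_in)
  then have "\<forall>k>n. w (eps k) = eps k"
    using p by (simp add: perm_act_eps_permutes)
  then show ?thesis by blast
qed

lemma genW_subset_W: "A \<subseteq> Wset \<Longrightarrow> genW A \<subseteq> Wset"
  unfolding genW_def using group.generate_incl[OF group_Wgrp] by simp

lemma subgroup_genW: "A \<subseteq> Wset \<Longrightarrow> subgroup (genW A) Wgrp"
  unfolding genW_def using group.generate_is_subgroup[OF group_Wgrp] by simp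

lemma genW_minimal: "A \<subseteq> K \<Longrightarrow> subgroup K Wgrp \<Longrightarrow> genW A \<subseteq> K"
  unfolding genW_def using group.generate_subgroup_incl[OF group_Wgrp] by simp

lemma genW_incl: "A \<subseteq> genW A"
  unfolding genW_def by (auto intro: generate.incl)

lemma genW_comp_closed: "x \<in> genW A \<Longrightarrow> y \<in> genW A \<Longrightarrow> x \<circ> y \<in> genW A"
  unfolding genW_def using generate.eng[of x Wgrp A y] by simp

lemma genW_fixes:
  assumes "A \<subseteq> Wset" "\<And>a. a \<in> A \<Longrightarrow> a v = v" "g \<in> genW A"
  shows "g v = v"
proof -
  have "{g \<in> Wset. g v = v} \<supseteq> A"
    using assms(1,2) by blast
  moreover have "subgroup {g \<in> Wset. g v = v} Wgrp"
  proof (rule group.subgroupI[OF group_Wgrp])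
    fix g assume "g \<in> {g \<in> Wset. g v = v}"
    then show "inv\<^bsub>Wgrp\<^esub> g \<in> {g \<in> Wset. g v = v}"
      using W_inv[of g] by (metis (mono_tags, lifting) comp_apply id_apply mem_Collect_eq)
  qed (auto intro: Wset.Wid W_comp_closed)
  ultimately show ?thesis
    using genW_minimal assms(3) by blast
qed

section \<open>The Coxeter presentation of the finitary symmetric group\<close>

definition adj_transp :: "nat \<Rightarrow> nat \<Rightarrow> nat" where
  "adj_transp i = transpose i (Suc i)"

text \<open>\<open>cycle_up k m\<close> is the cycle \<open>m \<mapsto> k \<mapsto> k+1 \<mapsto> \<dots> \<mapsto> m\<close>, the product
  \<open>adj_transp k \<circ> adj_transp (k+1) \<circ> \<dots> \<circ> adj_transp (m-1)\<close>; \<open>cycle_down k m\<close> is its inverse.\<close>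

definition cycle_up :: "nat \<Rightarrow> nat \<Rightarrow> nat \<Rightarrow> nat" where
  "cycle_up k m x =
    (if k < m then (if x = m then k else if k \<le> x \<and> x < m then Suc x else x) else x)"

definition cycle_down :: "nat \<Rightarrow> nat \<Rightarrow> nat \<Rightarrow> nat" where
  "cycle_down k m x =
    (if k < m then (if x = k then m else if k < x \<and> x \<le> m then x - 1 else x) else x)"

lemma cycle_up_Suc: "k < m \<Longrightarrow> cycle_up k m = adj_transp k \<circ> cycle_up (Suc k) m"
  by (auto simp: fun_eq_iff cycle_up_def adj_transp_def transpose_def)

lemma cycle_up_same: "cycle_up m m = id"
  by (simp add: fun_eq_iff cycle_up_def)

lemma cycle_down_same: "cycle_down m m = id"
  by (simp add: fun_eq_iff cycle_down_def)

lemma cycle_down_up: "cycle_down k m \<circ> cycle_up k m = id"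
  by (auto simp: fun_eq_iff cycle_up_def cycle_down_def)

lemma cycle_up_down: "cycle_up k m \<circ> cycle_down k m = id"
  by (auto simp: fun_eq_iff cycle_up_def cycle_down_def)

lemma cycle_down_adj: "k < m \<Longrightarrow> cycle_down (Suc k) m \<circ> adj_transp k = cycle_down k m"
  by (auto simp: fun_eq_iff cycle_down_def adj_transp_def transpose_def)

lemma cycle_down_adj_commute:
  "Suc i < k \<Longrightarrow> cycle_down k m \<circ> adj_transp i = adj_transp i \<circ> cycle_down k m"
  by (auto simp: fun_eq_iff cycle_down_def adj_transp_def transpose_def)

lemma cycle_down_adj_shift:
  "k < i \<Longrightarrow> i < m \<Longrightarrow> cycle_down k m \<circ> adj_transp i = adj_transp (i - 1) \<circ> cycle_down k m"
  by (auto simp: fun_eq_iff cycle_down_def adj_transp_def transpose_def)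

lemma cycle_up_permutes: "1 \<le> k \<Longrightarrow> m \<le> n \<Longrightarrow> cycle_up k m permutes {1..n}"
proof (rule inj_imp_permutes)
  show "inj_on (cycle_up k m) {1..n}"
    using cycle_down_up by (metis inj_on_id inj_on_imageI2 image_id)
qed (auto simp: cycle_up_def)

lemma cycle_down_permutes: "1 \<le> k \<Longrightarrow> m \<le> n \<Longrightarrow> cycle_down k m permutes {1..n}"
proof (rule inj_imp_permutes)
  show "inj_on (cycle_down k m) {1..n}"
    using cycle_up_down by (metis inj_on_id inj_on_imageI2 image_id)
qed (auto simp: cycle_down_def)

lemma permutes_cycle_down_last:
  assumes "p permutes {1..Suc n}"
  shows "cycle_down (p (Suc n)) (Suc n) \<circ> p permutes {1..n}"
proof -
  have k: "p (Suc n) \<in> {1..Suc n}"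
    using assms permutes_in_image by fastforce
  have "cycle_down (p (Suc n)) (Suc n) \<circ> p permutes {1..Suc n}"
    using k by (intro permutes_compose[OF assms] cycle_down_permutes) auto
  moreover have "(cycle_down (p (Suc n)) (Suc n) \<circ> p) (Suc n) = Suc n"
    using k by (simp add: cycle_down_def)
  ultimately show ?thesis
    by (metis (no_types, lifting) Diff_iff atLeastAtMost_iff le_SucE permutes_superset)
qed

locale A_inf_relations = group H for H (structure) +
  fixes f :: "nat \<Rightarrow> 'a"
  assumes f_closed: "i \<ge> 1 \<Longrightarrow> f i \<in> carrier H"
    and f_invol: "i \<ge> 1 \<Longrightarrow> f i \<otimes> f i = \<one>"
    and f_commute: "i \<ge> 1 \<Longrightarrow> Suc i < j \<Longrightarrow> f i \<otimes> f j = f j \<otimes> f i"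
    and f_braid: "i \<ge> 1 \<Longrightarrow> f i \<otimes> f (Suc i) \<otimes> f i = f (Suc i) \<otimes> f i \<otimes> f (Suc i)"
begin

text \<open>The image of \<open>cycle_up k (k+d)\<close>.\<close>

primrec cycle_word :: "nat \<Rightarrow> nat \<Rightarrow> 'a" where
  "cycle_word k 0 = \<one>"
| "cycle_word k (Suc d) = f k \<otimes> cycle_word (Suc k) d"

lemma cycle_word_closed: "k \<ge> 1 \<Longrightarrow> cycle_word k d \<in> carrier H"
  by (induction d arbitrary: k) (auto simp: f_closed)

lemma cycle_word_Suc_diff: "k < m \<Longrightarrow> cycle_word k (m - k) = f k \<otimes> cycle_word (Suc k) (m - Suc k)"
  by (metis Suc_diff_Suc cycle_word.simps(2))

lemma f_cycle_word_commute:
  "1 \<le> i \<Longrightarrow> Suc i < k \<Longrightarrow> f i \<otimes> cycle_word k d = cycle_word k d \<otimes> f i"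
proof (induction d arbitrary: k)
  case (Suc d)
  have c: "f i \<in> carrier H" "f k \<in> carrier H" "cycle_word (Suc k) d \<in> carrier H"
    using Suc by (auto simp: f_closed cycle_word_closed)
  have "f i \<otimes> cycle_word k (Suc d) = (f i \<otimes> f k) \<otimes> cycle_word (Suc k) d"
    using c by (simp add: m_assoc)
  also have "\<dots> = f k \<otimes> (f i \<otimes> cycle_word (Suc k) d)"
    using Suc f_commute[of i k] c by (simp add: m_assoc)
  also have "\<dots> = cycle_word k (Suc d) \<otimes> f i"
    using Suc c by (simp add: m_assoc)
  finally show ?case .
qed (simp add: f_closed)

text \<open>The word analogue of \<open>cycle_down_adj_shift\<close>; the braid relation enters here.\<close>

lemma f_cycle_word_shift:
  "1 \<le> k \<Longrightarrow> k < i \<Longrightarrow> i < k + d \<Longrightarrow> f i \<otimes> cycle_word k d = cycle_word k d \<otimes> f (i - 1)"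
proof (induction d arbitrary: k)
  case (Suc d)
  show ?case
  proof (cases "i = Suc k")
    case True
    then obtain d' where d': "d = Suc d'"
      using Suc by (cases d) auto
    let ?rest = "cycle_word (Suc (Suc k)) d'"
    have c: "f k \<in> carrier H" "f (Suc k) \<in> carrier H" "?rest \<in> carrier H"
      using Suc by (auto simp: f_closed cycle_word_closed)
    have "f i \<otimes> cycle_word k (Suc d) = (f (Suc k) \<otimes> f k \<otimes> f (Suc k)) \<otimes> ?rest"
      using c True d' by (simp add: m_assoc)
    also have "\<dots> = (f k \<otimes> f (Suc k) \<otimes> f k) \<otimes> ?rest"
      using f_braid[of k] Suc by simp
    also have "\<dots> = f k \<otimes> f (Suc k) \<otimes> (f k \<otimes> ?rest)"
      using c by (simp add: m_assoc)
    also have "\<dots> = f k \<otimes> f (Suc k) \<otimes> (?rest \<otimes> f k)"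
      using f_cycle_word_commute[of k "Suc (Suc k)" d'] Suc by simp
    also have "\<dots> = cycle_word k (Suc d) \<otimes> f (i - 1)"
      using c True d' by (simp add: m_assoc)
    finally show ?thesis .
  next
    case False
    then have ik: "Suc k < i"
      using Suc by simp
    have c: "f k \<in> carrier H" "f i \<in> carrier H" "f (i - 1) \<in> carrier H"
        "cycle_word (Suc k) d \<in> carrier H"
      using Suc ik by (auto simp: f_closed cycle_word_closed)
    have "f i \<otimes> cycle_word k (Suc d) = (f i \<otimes> f k) \<otimes> cycle_word (Suc k) d"
      using c by (simp add: m_assoc)
    also have "\<dots> = (f k \<otimes> f i) \<otimes> cycle_word (Suc k) d"
      using f_commute[of k i] Suc ik by simp
    also have "\<dots> = f k \<otimes> (f i \<otimes> cycle_word (Suc k) d)"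
      using c by (simp add: m_assoc)
    also have "\<dots> = cycle_word k (Suc d) \<otimes> f (i - 1)"
      using c Suc.IH[of "Suc k"] Suc.prems ik by (simp add: m_assoc)
    finally show ?thesis .
  qed
qed simp

text \<open>\<open>perm_word n p\<close> evaluates in \<open>H\<close> the normal form of \<open>p\<close> obtained by repeatedly
  splitting off the cycle that moves the value of the last point into place.\<close>

primrec perm_word :: "nat \<Rightarrow> (nat \<Rightarrow> nat) \<Rightarrow> 'a" where
  "perm_word 0 p = \<one>"
| "perm_word (Suc n) p = cycle_word (p (Suc n)) (Suc n - p (Suc n)) \<otimes>
     perm_word n (cycle_down (p (Suc n)) (Suc n) \<circ> p)"

lemma perm_word_closed: "p permutes {1..n} \<Longrightarrow> perm_word n p \<in> carrier H"
proof (induction n arbitrary: p)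
  case (Suc n)
  have "p (Suc n) \<ge> 1"
    using Suc permutes_in_image by fastforce
  then show ?case
    unfolding perm_word.simps
    by (intro m_closed cycle_word_closed Suc.IH permutes_cycle_down_last Suc.prems)
qed simp

lemma perm_word_id: "perm_word n id = \<one>"
  by (induction n) (simp_all add: cycle_down_same)

lemma perm_word_adj_last:
  assumes p: "p permutes {1..Suc n}" and i: "1 \<le> i" "i \<le> n" and k: "p (Suc n) \<in> {i, Suc i}"
  shows "perm_word (Suc n) (adj_transp i \<circ> p) = f i \<otimes> perm_word (Suc n) p"
proof -
  let ?m = "Suc n"
  have "cycle_down (Suc i) ?m \<circ> adj_transp i = cycle_down i ?m"
    using i by (simp add: cycle_down_adj)
  then have p': "cycle_down i ?m \<circ> (adj_transp i \<circ> p) = cycle_down (Suc i) ?m \<circ> p"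
      "cycle_down (Suc i) ?m \<circ> (adj_transp i \<circ> p) = cycle_down i ?m \<circ> p"
    by (metis adj_transp_def comp_assoc comp_id transpose_comp_involutory)+
  have c: "f i \<in> carrier H" "cycle_word (Suc i) (?m - Suc i) \<in> carrier H"
      "perm_word n (cycle_down (p ?m) ?m \<circ> p) \<in> carrier H"
    using i p perm_word_closed[OF permutes_cycle_down_last[OF p]]
    by (auto simp: f_closed cycle_word_closed)
  from k consider "p ?m = i" | "p ?m = Suc i"
    by blast
  then show ?thesis
  proof cases
    case 1
    then show ?thesis
      using p' c i f_invol[of i] by (simp add: adj_transp_def cycle_word_Suc_diff flip: m_assoc)
  next
    case 2
    then show ?thesis
      using p' c i by (simp add: adj_transp_def cycle_word_Suc_diff m_assoc)
  qed
qed

lemma perm_word_adj: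
  "p permutes {1..n} \<Longrightarrow> 1 \<le> i \<Longrightarrow> i < n \<Longrightarrow> perm_word n (adj_transp i \<circ> p) = f i \<otimes> perm_word n p"
proof (induction n arbitrary: p i)
  case (Suc n)
  define k where "k = p (Suc n)"
  define p' where "p' = cycle_down k (Suc n) \<circ> p"
  have k: "k \<in> {1..Suc n}"
    unfolding k_def using Suc permutes_in_image by fastforce
  have p': "p' permutes {1..n}"
    unfolding p'_def k_def by (rule permutes_cycle_down_last[OF Suc.prems(1)])
  have hp: "perm_word (Suc n) p = cycle_word k (Suc n - k) \<otimes> perm_word n p'"
    by (simp add: k_def p'_def)
  have c: "f i \<in> carrier H" "cycle_word k (Suc n - k) \<in> carrier H" "perm_word n p' \<in> carrier H"
    using Suc k p' by (auto simp: f_closed cycle_word_closed perm_word_closed)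
  consider "Suc i < k" | "k < i" | "k \<in> {i, Suc i}"
    by fastforce
  then show ?case
  proof cases
    case 1
    then have "cycle_down k (Suc n) \<circ> (adj_transp i \<circ> p) = adj_transp i \<circ> p'"
        "(adj_transp i \<circ> p) (Suc n) = k"
      by (simp_all add: p'_def k_def cycle_down_adj_commute flip: comp_assoc)
        (simp add: adj_transp_def)
    moreover have "perm_word n (adj_transp i \<circ> p') = f i \<otimes> perm_word n p'"
      by (rule Suc.IH[OF p']) (use 1 k Suc.prems in auto)
    ultimately have "perm_word (Suc n) (adj_transp i \<circ> p) =
        cycle_word k (Suc n - k) \<otimes> (f i \<otimes> perm_word n p')"
      by simp
    also have "\<dots> = f i \<otimes> (cycle_word k (Suc n - k) \<otimes> perm_word n p')"
      using c f_cycle_word_commute[of i k] Suc.prems 1 by (simp flip: m_assoc)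
    finally show ?thesis
      unfolding hp .
  next
    case 2
    then have "cycle_down k (Suc n) \<circ> (adj_transp i \<circ> p) = adj_transp (i - 1) \<circ> p'"
        "(adj_transp i \<circ> p) (Suc n) = k"
      using Suc k by (simp_all add: p'_def k_def cycle_down_adj_shift flip: comp_assoc)
        (simp add: adj_transp_def)
    moreover have "perm_word n (adj_transp (i - 1) \<circ> p') = f (i - 1) \<otimes> perm_word n p'"
      by (rule Suc.IH[OF p']) (use 2 k Suc.prems in auto)
    ultimately have "perm_word (Suc n) (adj_transp i \<circ> p) =
        cycle_word k (Suc n - k) \<otimes> (f (i - 1) \<otimes> perm_word n p')"
      by simp
    also have "\<dots> = f i \<otimes> (cycle_word k (Suc n - k) \<otimes> perm_word n p')"
      using c f_closed[of "i - 1"] f_cycle_word_shift[of k i "Suc n - k"] Suc.prems 2 k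
      by (simp flip: m_assoc)
    finally show ?thesis
      unfolding hp .
  next
    case 3
    then show ?thesis
      by (intro perm_word_adj_last[OF Suc.prems(1)]) (use Suc.prems in \<open>auto simp: k_def\<close>)
  qed
qed simp

lemma perm_word_cycle_up:
  assumes "q permutes {1..N}" "1 \<le> k" "k \<le> m" "m \<le> N"
  shows "perm_word N (cycle_up k m \<circ> q) = cycle_word k (m - k) \<otimes> perm_word N q"
  using assms
proof (induction "m - k" arbitrary: k)
  case 0
  then show ?case
    using perm_word_closed by (simp add: cycle_up_same)
next
  case (Suc d)
  then have km: "k < m"
    by simp
  have "cycle_up (Suc k) m \<circ> q permutes {1..N}"
    using Suc km by (intro permutes_compose[OF Suc.prems(1)] cycle_up_permutes) auto
  then have "perm_word N (cycle_up k m \<circ> q) = f k \<otimes> perm_word N (cycle_up (Suc k) m \<circ> q)"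
    using perm_word_adj Suc km cycle_up_Suc[OF km] by (simp add: comp_assoc)
  also have "\<dots> = f k \<otimes> (cycle_word (Suc k) (m - Suc k) \<otimes> perm_word N q)"
    using Suc km by (subst Suc.hyps(1)) auto
  also have "\<dots> = cycle_word k (m - k) \<otimes> perm_word N q"
    using Suc km perm_word_closed[OF Suc.prems(1)] f_closed[of k] cycle_word_closed[of "Suc k"]
    by (simp add: cycle_word_Suc_diff m_assoc)
  finally show ?case .
qed

lemma perm_word_comp:
  assumes "u permutes {1..n}" "n \<le> N" "q permutes {1..N}"
  shows "perm_word N (u \<circ> q) = perm_word n u \<otimes> perm_word N q"
  using assms
proof (induction n arbitrary: u)
  case 0
  then show ?case
    using perm_word_closed by simp
next
  case (Suc n)
  define k where "k = u (Suc n)"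
  define u' where "u' = cycle_down k (Suc n) \<circ> u"
  have k: "k \<in> {1..Suc n}"
    unfolding k_def using Suc permutes_in_image by fastforce
  have u': "u' permutes {1..n}"
    unfolding u'_def k_def by (rule permutes_cycle_down_last[OF Suc.prems(1)])
  have "u = cycle_up k (Suc n) \<circ> u'"
    unfolding u'_def by (metis comp_assoc cycle_up_down id_comp)
  moreover have "u' \<circ> q permutes {1..N}"
    using Suc by (intro permutes_compose[OF Suc.prems(3)] permutes_subset[OF u']) auto
  ultimately have "perm_word N (u \<circ> q) = cycle_word k (Suc n - k) \<otimes> perm_word N (u' \<circ> q)"
    using perm_word_cycle_up k Suc by (simp add: comp_assoc)
  also have "\<dots> = cycle_word k (Suc n - k) \<otimes> (perm_word n u' \<otimes> perm_word N q)"
    using Suc u' by (subst Suc.IH) auto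
  also have "\<dots> = perm_word (Suc n) u \<otimes> perm_word N q"
    using k perm_word_closed[OF u'] perm_word_closed[OF Suc.prems(3)] cycle_word_closed[of k]
    by (simp add: m_assoc k_def u'_def)
  finally show ?case .
qed

lemma perm_word_mono: "u permutes {1..n} \<Longrightarrow> n \<le> N \<Longrightarrow> perm_word N u = perm_word n u"
  using perm_word_comp[of u n N id] perm_word_closed[of u n] by (simp add: perm_word_id)

definition perm_hom :: "(nat \<Rightarrow> nat) \<Rightarrow> 'a" where
  "perm_hom p = perm_word (SOME n. p permutes {1..n}) p"

lemma perm_hom_eq:
  assumes "p permutes {1..n}"
  shows "perm_hom p = perm_word n p"
proof -
  define N where "N = (SOME n. p permutes {1..n})"
  have N: "p permutes {1..N}"
    unfolding N_def using assms by (rule someI)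
  have "perm_word (max n N) p = perm_word N p" "perm_word (max n N) p = perm_word n p"
    using perm_word_mono[OF N, of "max n N"] perm_word_mono[OF assms, of "max n N"] by simp_all
  then show ?thesis
    by (simp add: perm_hom_def N_def)
qed

lemma perm_hom_closed: "finperm p \<Longrightarrow> perm_hom p \<in> carrier H"
  unfolding finperm_def using perm_hom_eq perm_word_closed by auto

lemma perm_hom_comp:
  assumes "finperm u" "finperm q"
  shows "perm_hom (u \<circ> q) = perm_hom u \<otimes> perm_hom q"
proof -
  obtain n where u: "u permutes {1..n}" and q: "q permutes {1..n}"
    using assms by (rule finperm_common_bound)
  then show ?thesis
    using perm_hom_eq[OF permutes_compose[OF q u]] perm_hom_eq[OF u] perm_hom_eq[OF q]
    by (simp add: perm_word_comp)
qed

lemma perm_hom_adj: "i \<ge> 1 \<Longrightarrow> perm_hom (adj_transp i) = f i"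
  using perm_hom_eq[of "adj_transp i" "Suc i"] perm_word_adj[of id "Suc i" i] f_closed[of i]
  by (simp add: adj_transp_def permutes_swap_id perm_word_id)

end

section \<open>\<open>G\<close> is the finitary symmetric group of the odd numbers\<close>

abbreviation GX :: "lmap set" where
  "GX \<equiv> genW Xset"

lemma tbeta_permutes: "i \<ge> 1 \<Longrightarrow> tbeta i permutes {1..2*i+1}"
  unfolding tbeta_def by (rule permutes_swap_id) auto

lemma tbeta_fixes_even: "i \<ge> 1 \<Longrightarrow> even k \<Longrightarrow> tbeta i k = k"
  unfolding tbeta_def by (auto simp: transpose_def)

lemma sref_beta_in_Xset: "i \<ge> 1 \<Longrightarrow> sref (beta i) \<in> Xset"
  unfolding Xset_def by blast

lemma sref_beta_in_GX: "i \<ge> 1 \<Longrightarrow> sref (beta i) \<in> GX"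
  using sref_beta_in_Xset genW_incl by blast

lemma sref_beta_in_W: "i \<ge> 1 \<Longrightarrow> sref (beta i) \<in> Wset"
  using perm_act_in_W[OF tbeta_permutes] by (simp add: sref_beta)

lemma Xset_subset_W: "Xset \<subseteq> Wset"
  using sref_beta_in_W by (auto simp: Xset_def)

lemma perm_act_transpose_odd_in_GX:
  assumes "odd a" "odd b" "a < b"
  shows "perm_act (transpose a b) \<in> GX"
  using assms
proof (induction "b - a" arbitrary: a rule: less_induct)
  case less
  have a: "a \<ge> 1"
    using less by (cases a) auto
  have "tbeta ((a + 1) div 2) = transpose a (a + 2)"
    using less(2) by (auto simp: tbeta_def elim!: oddE)
  then have step: "perm_act (transpose a (a + 2)) \<in> GX"
    using sref_beta_in_GX[of "(a + 1) div 2"] sref_beta[of "(a + 1) div 2"] a by simp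
  show ?case
  proof (cases "b = a + 2")
    case False
    then have ab: "a + 2 < b"
      using less by presburger
    have "transpose a b = transpose a (a + 2) \<circ> transpose (a + 2) b \<circ> transpose a (a + 2)"
      using ab by (simp add: transpose_comp_triple)
    then have "perm_act (transpose a b) =
        perm_act (transpose a (a + 2)) \<circ> perm_act (transpose (a + 2) b) \<circ>
        perm_act (transpose a (a + 2))"
      using a ab by (simp add: perm_act_comp pos_preserving_transpose o_assoc)
    moreover have "perm_act (transpose (a + 2) b) \<in> GX"
      using less ab by (intro less.hyps) auto
    ultimately show ?thesis
      using step genW_comp_closed by simp
  qed (use step in simp)
qed

lemma perm_act_odd_in_GX:
  assumes "q permutes {1..n}" "\<And>k. even k \<Longrightarrow> q k = k"
  shows "perm_act q \<in> GX"
proof -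
  let ?S = "{k \<in> {1..n}. odd k}"
  have "q permutes ?S"
    by (rule permutes_superset[OF assms(1)]) (auto simp: assms(2))
  moreover have "finite ?S"
    by simp
  ultimately show ?thesis
  proof (induction rule: permutes_induct)
    case id
    then show ?case
      by (metis perm_act_id genW_def generate.one Wgrp_simps(3))
  next
    case (swap a b p)
    have "perm_act (transpose a b) \<in> GX"
      using swap perm_act_transpose_odd_in_GX[of a b] perm_act_transpose_odd_in_GX[of b a]
      by (cases a b rule: linorder_cases) (auto simp: transpose_commute)
    moreover have "pos_preserving p"
      using swap permutes_subset[of p ?S "{1..n}"] pos_preserving_permutes by blast
    then have "perm_act (transpose a b \<circ> p) = perm_act p \<circ> perm_act (transpose a b)"
      by (simp add: perm_act_comp)
    ultimately show ?case
      using swap genW_comp_closed by metis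
  qed
qed

lemma permutes_fixes_even:
  assumes q: "q permutes {1..n}" and stab: "\<And>k. even k \<Longrightarrow> k \<ge> 2 \<Longrightarrow> perm_act q (eps k) = eps k"
    and k: "even k"
  shows "q k = k"
proof (cases "k = 0")
  case False
  then have "k \<ge> 2"
    using k by presburger
  then show ?thesis
    using k stab perm_act_fixes_eps[OF q, of k] by simp
qed (simp add: permutes_atLeast1_0[OF q])

lemma GX_eq_even_stabilizer: "GX = {w \<in> Wset. \<forall>k. even k \<and> k \<ge> 2 \<longrightarrow> w (eps k) = eps k}"
proof (intro equalityI subsetI)
  fix g assume g: "g \<in> GX"
  have "a (eps k) = eps k" if a: "a \<in> Xset" and k: "even k" "k \<ge> 2" for a k
  proof -
    obtain i where i: "i \<ge> 1" "a = perm_act (tbeta i)"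
      using a by (auto simp: Xset_def sref_beta)
    have "perm_act (tbeta i) (eps k) = eps (tbeta i k)"
      unfolding tbeta_def using i k by (intro perm_act_transpose_eps) auto
    then show ?thesis
      using i tbeta_fixes_even[OF i(1) k(1)] by simp
  qed
  then have "g (eps k) = eps k" if "even k" "k \<ge> 2" for k
    using genW_fixes[OF Xset_subset_W _ g] that by blast
  moreover have "g \<in> Wset"
    using g genW_subset_W[OF Xset_subset_W] by blast
  ultimately show "g \<in> {w \<in> Wset. \<forall>k. even k \<and> k \<ge> 2 \<longrightarrow> w (eps k) = eps k}"
    by blast
next
  fix w assume w: "w \<in> {w \<in> Wset. \<forall>k. even k \<and> k \<ge> 2 \<longrightarrow> w (eps k) = eps k}"
  then have "w \<in> Wset"
    by simp
  then obtain q n where q: "q permutes {1..n}" "w = perm_act q"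
    using W_eq_perm_act by blast
  have "q k = k" if "even k" for k
    using permutes_fixes_even[OF q(1) _ that] w q(2) by simp
  then have "perm_act q \<in> GX"
    by (rule perm_act_odd_in_GX[OF q(1)])
  then show "w \<in> GX"
    using q(2) by simp
qed

definition odd_finperm :: "(nat \<Rightarrow> nat) \<Rightarrow> bool" where
  "odd_finperm q \<longleftrightarrow> finperm q \<and> (\<forall>k. even k \<longrightarrow> q k = k)"

lemma GX_elem_eq_perm_act:
  assumes g: "g \<in> GX"
  shows "\<exists>q. odd_finperm q \<and> g = perm_act q"
proof -
  have "g \<in> Wset" and stab: "\<And>k. even k \<Longrightarrow> k \<ge> 2 \<Longrightarrow> g (eps k) = eps k"
    using g unfolding GX_eq_even_stabilizer by simp_all
  then obtain q n where q: "q permutes {1..n}" "g = perm_act q"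
    using W_eq_perm_act by blast
  have "q k = k" if "even k" for k
    using permutes_fixes_even[OF q(1) _ that] stab q(2) by simp
  then show ?thesis
    using q by (auto simp: odd_finperm_def finperm_def)
qed

lemma odd_finperm_comp: "odd_finperm q1 \<Longrightarrow> odd_finperm q2 \<Longrightarrow> odd_finperm (q1 \<circ> q2)"
  by (simp add: odd_finperm_def finperm_comp)

lemma odd_finperm_tbeta: "i \<ge> 1 \<Longrightarrow> odd_finperm (tbeta i)"
  unfolding odd_finperm_def finperm_def using tbeta_permutes tbeta_fixes_even by blast

lemma odd_finperm_pos_preserving: "odd_finperm q \<Longrightarrow> pos_preserving q"
  unfolding odd_finperm_def finperm_def using pos_preserving_permutes by blast

lemma odd_finperm_perm_act_inj: "odd_finperm q \<Longrightarrow> odd_finperm q' \<Longrightarrow> perm_act q = perm_act q' \<Longrightarrow> q = q'"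
  by (auto simp: odd_finperm_def finperm_def intro: perm_act_inj dest: permutes_atLeast1_0)

definition odd_relabel :: "(nat \<Rightarrow> nat) \<Rightarrow> nat \<Rightarrow> nat" where
  "odd_relabel q = (\<lambda>i. if i = 0 then 0 else (q (2*i - 1) + 1) div 2)"

lemma odd_finperm_odd:
  assumes "odd_finperm q" "odd x"
  shows "odd (q x)"
proof (rule ccontr)
  assume "\<not> odd (q x)"
  then have "q (q x) = q x"
    using assms(1) by (simp add: odd_finperm_def)
  moreover have "inj q"
    using assms(1) by (auto simp: odd_finperm_def finperm_def dest: permutes_inj)
  ultimately show False
    using \<open>\<not> odd (q x)\<close> assms(2) by (metis injD)
qed

lemma inj_on_odd_relabel:
  assumes "odd_finperm q"
  shows "inj_on (odd_relabel q) {1..}"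
proof (rule inj_onI)
  fix i j assume i: "i \<in> {1..}" and j: "j \<in> {1..}" and eq: "odd_relabel q i = odd_relabel q j"
  have "odd (q (2*i - 1))" "odd (q (2*j - 1))"
    using i j odd_finperm_odd[OF assms] by simp_all
  moreover have "(q (2*i - 1) + 1) div 2 = (q (2*j - 1) + 1) div 2"
    using eq i j by (simp add: odd_relabel_def)
  ultimately have "q (2*i - 1) = q (2*j - 1)"
    by (auto elim!: oddE)
  moreover have "inj q"
    using assms by (auto simp: odd_finperm_def finperm_def dest: permutes_inj)
  ultimately have "2*i - 1 = 2*j - 1"
    by (simp add: inj_eq)
  then show "i = j"
    using i j by simp
qed

lemma finperm_odd_relabel:
  assumes "odd_finperm q"
  shows "finperm (odd_relabel q)"
proof -
  obtain n where q: "q permutes {1..n}"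
    using assms unfolding odd_finperm_def finperm_def by blast
  have "odd_relabel q permutes {1..n}"
  proof (rule inj_imp_permutes)
    show "inj_on (odd_relabel q) {1..n}"
      using inj_on_odd_relabel[OF assms] by (rule inj_on_subset) auto
    show "odd_relabel q i \<in> {1..n}" if i: "i \<in> {1..n}" for i
    proof (cases "2*i - 1 \<in> {1..n}")
      case True
      then have "q (2*i - 1) \<in> {1..n}"
        using permutes_in_image[OF q] by simp
      then show ?thesis
        using i by (auto simp: odd_relabel_def)
    next
      case False
      then have "q (2*i - 1) = 2*i - 1"
        using permutes_not_in[OF q] by simp
      then show ?thesis
        using i by (auto simp: odd_relabel_def)
    qed
    show "odd_relabel q i = i" if i: "i \<notin> {1..n}" for i
    proof (cases "i = 0")
      case False
      then have "2*i - 1 \<notin> {1..n}"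
        using i by auto
      then have "q (2*i - 1) = 2*i - 1"
        using permutes_not_in[OF q] by simp
      then show ?thesis
        using False by (simp add: odd_relabel_def)
    qed (simp add: odd_relabel_def)
  qed simp
  then show ?thesis
    by (auto simp: finperm_def)
qed

lemma odd_relabel_comp:
  assumes "odd_finperm q2"
  shows "odd_relabel (q1 \<circ> q2) = odd_relabel q1 \<circ> odd_relabel q2"
proof
  fix i
  show "odd_relabel (q1 \<circ> q2) i = (odd_relabel q1 \<circ> odd_relabel q2) i"
  proof (cases "i = 0")
    case False
    then obtain m where "q2 (2*i - 1) = 2*m + 1"
      using odd_finperm_odd[OF assms, of "2*i - 1"] by (auto elim: oddE)
    then show ?thesis
      using False by (simp add: odd_relabel_def)
  qed (simp add: odd_relabel_def)
qed

lemma odd_relabel_tbeta: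
  assumes "i \<ge> 1"
  shows "odd_relabel (tbeta i) = adj_transp i"
proof
  fix j
  consider "j = 0" | "j = i" | "j = Suc i" | "j \<noteq> 0" "j \<noteq> i" "j \<noteq> Suc i"
    by blast
  then show "odd_relabel (tbeta i) j = adj_transp i j"
  proof cases
    case 4
    then have "2*j - 1 \<noteq> 2*i - 1" "2*j - 1 \<noteq> 2*i + 1"
      using assms by auto
    then show ?thesis
      using 4 by (simp add: odd_relabel_def adj_transp_def tbeta_def)
  qed (use assms in \<open>simp_all add: odd_relabel_def adj_transp_def tbeta_def\<close>)
qed

abbreviation GX_grp :: "lmap monoid" where
  "GX_grp \<equiv> Wgrp\<lparr>carrier := GX\<rparr>"

lemma group_GX_grp: "group GX_grp"
  using group.subgroup_imp_group[OF group_Wgrp subgroup_genW[OF Xset_subset_W]] .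

lemma GX_grp_simps [simp]: "carrier GX_grp = GX" "x \<otimes>\<^bsub>GX_grp\<^esub> y = x \<circ> y" "\<one>\<^bsub>GX_grp\<^esub> = id"
  by (simp_all add: Wgrp_def)

lemma GX_grp_pow: "x [^]\<^bsub>GX_grp\<^esub> (n::nat) = x ^^ n"
  by (induction n) (simp_all add: funpow_swap1)

lemma perm_act_funpow: "pos_preserving q \<Longrightarrow> perm_act q ^^ n = perm_act (q ^^ n)"
proof (induction n)
  case (Suc n)
  have "perm_act q ^^ Suc n = perm_act q \<circ> perm_act (q ^^ n)"
    using Suc by simp
  also have "\<dots> = perm_act (q ^^ n \<circ> q)"
    using perm_act_comp[OF Suc.prems] by simp
  finally show ?case
    by (simp only: funpow_Suc_right)
qed (simp add: perm_act_id)

lemma (in group) ord_eq_prime: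
  assumes "x \<in> carrier G" "x \<noteq> \<one>" "x [^] p = \<one>" "Factorial_Ring.prime p"
  shows "ord x = p"
proof -
  have "ord x dvd p"
    using pow_eq_id[OF assms(1)] assms(3) by simp
  moreover have "ord x \<noteq> 1"
    using ord_eq_1[OF assms(1)] assms(2) by simp
  ultimately show ?thesis
    using assms(4) by (auto simp: prime_nat_iff)
qed

lemma transpose_chain_cube:
  assumes "a \<noteq> b" "a \<noteq> c" "b \<noteq> c"
  shows "(transpose b c \<circ> transpose a b) ^^ 3 = id"
proof
  fix x
  consider "x = a" | "x = b" | "x = c" | "x \<notin> {a, b, c}"
    by blast
  then show "((transpose b c \<circ> transpose a b) ^^ 3) x = id x"
    using assms by cases (simp_all add: numeral_3_eq_3 transpose_def)
qed

lemma disjoint_transpose_square: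
  assumes "a \<noteq> c" "a \<noteq> d" "b \<noteq> c" "b \<noteq> d"
  shows "(transpose c d \<circ> transpose a b) ^^ 2 = id"
proof
  fix x
  consider "x = a" | "x = b" | "x = c" | "x = d" | "x \<notin> {a, b, c, d}"
    by blast
  then show "((transpose c d \<circ> transpose a b) ^^ 2) x = id x"
    using assms by cases (auto simp: numeral_2_eq_2 transpose_def)
qed

lemma tbeta_neighbour_cube:
  assumes "i \<ge> 1" "j \<ge> 1" "j = Suc i \<or> i = Suc j"
  shows "(tbeta j \<circ> tbeta i) ^^ 3 = id"
  using assms(3)
proof
  assume "j = Suc i"
  then have "tbeta i = transpose (2*i - 1) (2*i + 1)" "tbeta j = transpose (2*i + 1) (2*i + 3)"
    by (simp_all add: tbeta_def eval_nat_numeral)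
  then show ?thesis
    using assms(1) transpose_chain_cube[of "2*i - 1" "2*i + 1" "2*i + 3"] by simp
next
  assume "i = Suc j"
  then have "tbeta i = transpose (2*j + 3) (2*j + 1)" "tbeta j = transpose (2*j + 1) (2*j - 1)"
    by (simp_all add: tbeta_def transpose_commute eval_nat_numeral)
  then show ?thesis
    using assms(2) transpose_chain_cube[of "2*j + 3" "2*j + 1" "2*j - 1"] by simp
qed

lemma tbeta_distant_square:
  assumes "i \<ge> 1" "j \<ge> 1" "Suc i < j \<or> Suc j < i"
  shows "(tbeta j \<circ> tbeta i) ^^ 2 = id"
  unfolding tbeta_def using assms by (intro disjoint_transpose_square) auto

lemma tbeta_comp_ne_id:
  assumes "i \<ge> 1" "i \<noteq> j"
  shows "tbeta j \<circ> tbeta i \<noteq> id"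
proof
  assume "tbeta j \<circ> tbeta i = id"
  then have "tbeta j (tbeta i (2*i - 1)) = 2*i - 1"
    by (metis comp_apply id_apply)
  moreover have "tbeta i (2*i - 1) = 2*i + 1"
    by (simp add: tbeta_def)
  moreover have "tbeta j (2*i + 1) \<noteq> 2*i - 1"
    using assms by (auto simp: tbeta_def transpose_def)
  ultimately show False
    by simp
qed

lemma tbeta_invol: "tbeta i \<circ> tbeta i = id"
  by (simp add: tbeta_def)

lemma sref_beta_mult:
  "i \<ge> 1 \<Longrightarrow> j \<ge> 1 \<Longrightarrow> sref (beta i) \<circ> sref (beta j) = perm_act (tbeta j \<circ> tbeta i)"
  by (simp add: sref_beta perm_act_comp odd_finperm_pos_preserving odd_finperm_tbeta)

lemma sref_beta_mult_pow:
  "i \<ge> 1 \<Longrightarrow> j \<ge> 1 \<Longrightarrow>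
    (sref (beta i) \<otimes>\<^bsub>GX_grp\<^esub> sref (beta j)) [^]\<^bsub>GX_grp\<^esub> (n::nat) =
      perm_act ((tbeta j \<circ> tbeta i) ^^ n)"
  by (simp add: GX_grp_pow sref_beta_mult perm_act_funpow pos_preserving_comp
      odd_finperm_pos_preserving odd_finperm_tbeta)

lemma ord_sref_beta_mult:
  assumes "i \<ge> 1" "j \<ge> 1"
  shows "group.ord GX_grp (sref (beta i) \<otimes>\<^bsub>GX_grp\<^esub> sref (beta j)) = mA i j"
proof -
  interpret GX: group GX_grp
    by (rule group_GX_grp)
  let ?x = "sref (beta i) \<otimes>\<^bsub>GX_grp\<^esub> sref (beta j)"
  have x: "?x \<in> carrier GX_grp"
    using assms sref_beta_in_GX genW_comp_closed by simp
  have "(tbeta j \<circ> tbeta i) 0 = 0"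
    using assms by (simp add: tbeta_def)
  then have x_ne: "?x \<noteq> \<one>\<^bsub>GX_grp\<^esub>" if "i \<noteq> j"
    using sref_beta_mult[OF assms] perm_act_eq_id_iff tbeta_comp_ne_id[OF assms(1) that] by simp
  consider "i = j" | "j = Suc i \<or> i = Suc j" | "Suc i < j \<or> Suc j < i"
    by linarith
  then show ?thesis
  proof cases
    case 1
    then have "?x = \<one>\<^bsub>GX_grp\<^esub>"
      using sref_beta_mult[OF assms] by (simp add: tbeta_invol perm_act_id)
    then show ?thesis
      using 1 GX.ord_id by (simp only:) (simp add: mA_def)
  next
    case 2
    then have "GX.ord ?x = 3"
      using GX.ord_eq_prime[OF x x_ne] sref_beta_mult_pow[OF assms, of 3]
        tbeta_neighbour_cube[OF assms 2] by (auto simp: perm_act_id)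
    then show ?thesis
      using 2 by (auto simp: mA_def)
  next
    case 3
    then have "GX.ord ?x = 2"
      using GX.ord_eq_prime[OF x x_ne] sref_beta_mult_pow[OF assms, of 2]
        tbeta_distant_square[OF assms 3] by (auto simp: perm_act_id)
    then show ?thesis
      using 3 by (auto simp: mA_def)
  qed
qed

lemma (in group) involutions_commute:
  assumes "a \<in> carrier G" "b \<in> carrier G" "a \<otimes> a = \<one>" "b \<otimes> b = \<one>" "(a \<otimes> b) [^] (2::nat) = \<one>"
  shows "a \<otimes> b = b \<otimes> a"
proof -
  have "inv a = a" "inv b = b"
    using assms inv_equality by blast+
  moreover have "inv (a \<otimes> b) = a \<otimes> b"
    using assms by (intro inv_equality) (simp_all add: numeral_2_eq_2)
  ultimately show ?thesis
    using inv_mult_group[OF assms(1,2)] by simp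
qed

lemma (in group) involutions_braid:
  assumes "a \<in> carrier G" "b \<in> carrier G" "a \<otimes> a = \<one>" "b \<otimes> b = \<one>" "(a \<otimes> b) [^] (3::nat) = \<one>"
  shows "a \<otimes> b \<otimes> a = b \<otimes> a \<otimes> b"
proof -
  have "inv a = a" "inv b = b"
    using assms inv_equality by blast+
  then have "b \<otimes> a = inv (a \<otimes> b)"
    using inv_mult_group[OF assms(1,2)] by simp
  also have "\<dots> = a \<otimes> b \<otimes> a \<otimes> b"
    using assms by (intro inv_equality) (simp_all add: numeral_3_eq_3 m_assoc)
  finally have "b \<otimes> a \<otimes> b = a \<otimes> b \<otimes> a \<otimes> b \<otimes> b"
    by simp
  also have "\<dots> = a \<otimes> b \<otimes> a \<otimes> (b \<otimes> b)"
    using assms(1,2) by (simp add: m_assoc)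
  finally show ?thesis
    using assms by simp
qed

lemma A_inf_relations_sref_beta:
  assumes H: "group H" and \<phi>: "\<phi> \<in> Xset \<rightarrow> carrier H"
    and R: "\<forall>s\<in>Xset. \<forall>t\<in>Xset. \<forall>n::nat. (s \<otimes>\<^bsub>GX_grp\<^esub> t) [^]\<^bsub>GX_grp\<^esub> n = \<one>\<^bsub>GX_grp\<^esub> \<longrightarrow>
            (\<phi> s \<otimes>\<^bsub>H\<^esub> \<phi> t) [^]\<^bsub>H\<^esub> n = \<one>\<^bsub>H\<^esub>"
  shows "A_inf_relations H (\<lambda>i. \<phi> (sref (beta i)))"
proof -
  interpret H: group H
    by (rule H)
  define f where "f i = \<phi> (sref (beta i))" for i
  have closed: "f i \<in> carrier H" if "i \<ge> 1" for i
    using \<phi> sref_beta_in_Xset[OF that] by (auto simp: f_def)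
  have rel: "(f i \<otimes>\<^bsub>H\<^esub> f j) [^]\<^bsub>H\<^esub> n = \<one>\<^bsub>H\<^esub>"
    if "i \<ge> 1" "j \<ge> 1" "(tbeta j \<circ> tbeta i) ^^ n = id" for i j n
    using R sref_beta_in_Xset[OF that(1)] sref_beta_in_Xset[OF that(2)]
      sref_beta_mult_pow[OF that(1,2), of n] that(3)
    by (simp add: f_def perm_act_id)
  have invol: "f i \<otimes>\<^bsub>H\<^esub> f i = \<one>\<^bsub>H\<^esub>" if "i \<ge> 1" for i
    using rel[OF that that, of 1] closed[OF that] by (simp add: tbeta_invol)
  show ?thesis
    unfolding f_def[symmetric]
  proof unfold_locales
    fix i :: nat assume i: "1 \<le> i"
    show "f i \<in> carrier H" "f i \<otimes>\<^bsub>H\<^esub> f i = \<one>\<^bsub>H\<^esub>"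
      using closed invol i by simp_all
    show "f i \<otimes>\<^bsub>H\<^esub> f (Suc i) \<otimes>\<^bsub>H\<^esub> f i = f (Suc i) \<otimes>\<^bsub>H\<^esub> f i \<otimes>\<^bsub>H\<^esub> f (Suc i)"
      using i closed invol rel[of i "Suc i" 3] tbeta_neighbour_cube[of i "Suc i"]
      by (intro H.involutions_braid) simp_all
  next
    fix i j :: nat assume "1 \<le> i" "Suc i < j"
    then show "f i \<otimes>\<^bsub>H\<^esub> f j = f j \<otimes>\<^bsub>H\<^esub> f i"
      using closed invol rel[of i j 2] tbeta_distant_square[of i j]
      by (intro H.involutions_commute) simp_all
  qed
qed

context A_inf_relations
begin

text \<open>\<open>perm_act\<close> is a right action, hence the inverse.\<close>

definition GX_hom :: "lmap \<Rightarrow> 'a" where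
  "GX_hom g = inv (perm_hom (odd_relabel (THE q. odd_finperm q \<and> g = perm_act q)))"

lemma GX_hom_perm_act:
  assumes "odd_finperm q"
  shows "GX_hom (perm_act q) = inv (perm_hom (odd_relabel q))"
proof -
  have "(THE q'. odd_finperm q' \<and> perm_act q = perm_act q') = q"
    using assms by (intro the_equality) (simp_all add: odd_finperm_perm_act_inj)
  then show ?thesis
    by (simp add: GX_hom_def)
qed

lemma GX_hom_hom: "GX_hom \<in> hom GX_grp H"
proof (rule homI)
  fix x assume "x \<in> carrier GX_grp"
  then obtain q where "odd_finperm q" "x = perm_act q"
    using GX_elem_eq_perm_act by auto
  then show "GX_hom x \<in> carrier H"
    by (simp add: GX_hom_perm_act perm_hom_closed finperm_odd_relabel)
next
  fix x y assume "x \<in> carrier GX_grp" "y \<in> carrier GX_grp"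
  then obtain q1 q2 where q: "odd_finperm q1" "x = perm_act q1" "odd_finperm q2" "y = perm_act q2"
    using GX_elem_eq_perm_act[of x] GX_elem_eq_perm_act[of y] by auto
  then have "x \<otimes>\<^bsub>GX_grp\<^esub> y = perm_act (q2 \<circ> q1)"
    by (simp add: perm_act_comp odd_finperm_pos_preserving)
  moreover have "perm_hom (odd_relabel (q2 \<circ> q1)) =
      perm_hom (odd_relabel q2) \<otimes> perm_hom (odd_relabel q1)"
    using q by (simp add: odd_relabel_comp perm_hom_comp finperm_odd_relabel)
  ultimately show "GX_hom (x \<otimes>\<^bsub>GX_grp\<^esub> y) = GX_hom x \<otimes> GX_hom y"
    using q by (simp add: GX_hom_perm_act odd_finperm_comp inv_mult_group perm_hom_closed
        finperm_odd_relabel)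
qed

lemma GX_hom_sref_beta: "i \<ge> 1 \<Longrightarrow> GX_hom (sref (beta i)) = f i"
  using inv_equality[OF f_invol f_closed f_closed, of i]
  by (simp add: sref_beta GX_hom_perm_act odd_finperm_tbeta odd_relabel_tbeta perm_hom_adj)

end

lemma sref_beta_inj:
  assumes "i \<ge> 1" "j \<ge> 1" "sref (beta i) = sref (beta j)"
  shows "i = j"
proof (rule ccontr)
  assume "i \<noteq> j"
  have "tbeta i = tbeta j"
    using assms perm_act_inj[of "tbeta i" "tbeta j"] by (simp add: sref_beta tbeta_def)
  then show False
    using tbeta_comp_ne_id[OF assms(1) \<open>i \<noteq> j\<close>] tbeta_invol[of i] by simp
qed

lemma sref_beta_ne_id: "i \<ge> 1 \<Longrightarrow> sref (beta i) \<noteq> id"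
  using perm_act_eq_id_iff[of "tbeta i"] by (simp add: sref_beta tbeta_def transpose_eq_id_iff)

theorem coxeter_system_A_inf_GX: "coxeter_system_A_inf TYPE('h) GX_grp Xset"
proof -
  have gen: "generate GX_grp Xset = GX"
    using group.generate_consistent[OF group_Wgrp genW_incl subgroup_genW[OF Xset_subset_W]]
    by (simp add: genW_def)
  have invol: "s \<noteq> id \<and> s \<circ> s = id" if "s \<in> Xset" for s
    using that sref_beta_ne_id by (auto simp: Xset_def tbeta_invol perm_act_id sref_beta_mult)
  have bij: "bij_betw (\<lambda>i. sref (beta i)) {1..} Xset"
    by (rule bij_betwI') (auto simp: Xset_def intro: sref_beta_inj)
  have univ: "\<exists>h \<in> hom GX_grp H. \<forall>s\<in>Xset. h s = \<phi> s"
    if "group H" "\<phi> \<in> Xset \<rightarrow> carrier H"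
      "\<forall>s\<in>Xset. \<forall>t\<in>Xset. \<forall>n::nat. (s \<otimes>\<^bsub>GX_grp\<^esub> t) [^]\<^bsub>GX_grp\<^esub> n = \<one>\<^bsub>GX_grp\<^esub> \<longrightarrow>
            (\<phi> s \<otimes>\<^bsub>H\<^esub> \<phi> t) [^]\<^bsub>H\<^esub> n = \<one>\<^bsub>H\<^esub>"
    for H :: "'h monoid" and \<phi>
  proof -
    interpret A_inf_relations H "\<lambda>i. \<phi> (sref (beta i))"
      by (rule A_inf_relations_sref_beta[OF that])
    show ?thesis
      using GX_hom_hom GX_hom_sref_beta by (auto simp: Xset_def)
  qed
  show ?thesis
    unfolding coxeter_system_A_inf_def coxeter_system_def
    using group_GX_grp genW_incl[of Xset] gen invol bij ord_sref_beta_mult univ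
    by (intro conjI exI[of _ "\<lambda>i. sref (beta i)"]) auto
qed

section \<open>The canonical generators of \<open>G\<close>\<close>

lemma Phi_pos_eq: "Phi_pos = {eps_diff a c | a c. 1 \<le> a \<and> a < c}"
proof (intro equalityI subsetI)
  fix \<gamma> assume \<gamma>: "\<gamma> \<in> Phi_pos"
  then obtain w i where wi: "w \<in> Wset" "i \<ge> 1" "\<gamma> = w (alpha i)"
    by (auto simp: Phi_pos_def Phi_def)
  then obtain p n where p: "p permutes {1..n}" "w = perm_act p"
    using W_eq_perm_act by blast
  define a where "a = Hilbert_Choice.inv p i"
  define c where "c = Hilbert_Choice.inv p (Suc i)"
  have "\<gamma> = eps_diff a c"
    using wi p
      perm_act_eps_diff[OF permutes_bij[OF p(1)] permutes_atLeast1_0[OF p(1)], of i "Suc i"]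
    by (simp add: alpha_eq_eps_diff a_def c_def)
  moreover have "a \<ge> 1" "c \<ge> 1" "a \<noteq> c"
    using pos_preserving_permutes[OF permutes_inv[OF p(1)]]
      permutes_inj[OF permutes_inv[OF p(1)]] wi(2)
    by (auto simp: pos_preserving_def a_def c_def inj_eq)
  moreover have "\<not> c < a"
  proof
    assume "c < a"
    then have "\<gamma> c < 0"
      using \<open>\<gamma> = eps_diff a c\<close> by (simp add: eps_diff_def eps_def)
    then show False
      using \<gamma> by (auto simp: Phi_pos_def not_le[symmetric])
  qed
  ultimately show "\<gamma> \<in> {eps_diff a c | a c. 1 \<le> a \<and> a < c}"
    using not_less_iff_gr_or_eq by blast
next
  fix \<gamma> assume "\<gamma> \<in> {eps_diff a c | a c. 1 \<le> a \<and> a < c}"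
  then obtain a c where ac: "1 \<le> a" "a < c" "\<gamma> = eps_diff a c"
    by blast
  have "perm_act (transpose (Suc a) c) (alpha a) = eps_diff a c"
    using ac
    by (cases "c = Suc a") (simp_all add: alpha_eq_eps_diff perm_act_eps_diff transpose_def)
  moreover have "perm_act (transpose (Suc a) c) \<in> Wset"
    using ac by (cases "c = Suc a") (simp_all add: perm_act_id Wset.Wid perm_act_transpose_in_W)
  ultimately have "\<gamma> \<in> Phi"
    using ac unfolding Phi_def by (metis (mono_tags, lifting) mem_Collect_eq)
  then show "\<gamma> \<in> Phi_pos"
    using ac by (simp add: Phi_pos_def eps_diff_def eps_def)
qed

lemma sref_eps_diff_in_GX_iff:
  assumes "1 \<le> a" "a < c"
  shows "sref (eps_diff a c) \<in> GX \<longleftrightarrow> odd a \<and> odd c"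
proof
  assume "sref (eps_diff a c) \<in> GX"
  then have stab: "sref (eps_diff a c) (eps k) = eps k" if "even k" "k \<ge> 2" for k
    using that unfolding GX_eq_even_stabilizer by simp
  have "odd x" if x: "x \<in> {a, c}" for x
  proof (rule ccontr)
    assume "\<not> odd x"
    moreover have "x \<ge> 1"
      using x assms by auto
    ultimately have "x \<ge> 2"
      by presburger
    then have "eps (transpose a c x) = eps x"
      using stab \<open>\<not> odd x\<close> assms by (simp add: sref_eps_diff perm_act_transpose_eps)
    moreover have "transpose a c x \<ge> 1" "transpose a c x \<noteq> x"
      using x assms by (auto simp: transpose_def)
    ultimately show False
      using eps_inj \<open>x \<ge> 1\<close> by blast
  qed
  then show "odd a \<and> odd c"
    by simp
next
  assume "odd a \<and> odd c"
  then show "sref (eps_diff a c) \<in> GX"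
    using assms by (simp add: sref_eps_diff perm_act_transpose_odd_in_GX)
qed

lemma pos_comb_support:
  fixes \<gamma> :: vec
  assumes "finite F" "\<beta> \<in> F" "\<forall>\<beta>'\<in>F. c \<beta>' > 0 \<and> (\<forall>k. \<beta>' k \<ge> 0)"
    and "\<forall>k. \<gamma> k = (\<Sum>\<beta>'\<in>F. c \<beta>' * \<beta>' k)" and "\<beta> k > 0"
  shows "\<gamma> k > 0"
proof -
  have "c \<beta> * \<beta> k \<le> (\<Sum>\<beta>'\<in>F. c \<beta>' * \<beta>' k)"
    using assms(3)
    by (intro member_le_sum[OF assms(2) _ assms(1)]) (auto intro!: mult_nonneg_nonneg)
  moreover have "c \<beta> * \<beta> k > 0"
    using assms(2,3,5) by simp
  ultimately show ?thesis
    using assms(4) by simp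
qed

lemma eps_diff_in_Phi_pos: "1 \<le> a \<Longrightarrow> a < c \<Longrightarrow> eps_diff a c \<in> Phi_pos"
  unfolding Phi_pos_eq by blast

lemma beta_Phi_pos: "i \<ge> 1 \<Longrightarrow> beta i \<in> Phi_pos"
  by (simp add: beta_eq_eps_diff eps_diff_in_Phi_pos)

lemma beta_in_Pi_of_GX:
  assumes i: "i \<ge> 1"
  shows "beta i \<in> Pi_of GX"
proof -
  have "\<beta> = beta i" if F: "finite F" "\<beta> \<in> F"
      "F \<subseteq> {\<beta> \<in> Phi_pos. sref \<beta> \<in> GX}" "\<forall>\<beta>\<in>F. c \<beta> > 0"
      "\<forall>k. beta i k = (\<Sum>\<beta>\<in>F. c \<beta> * \<beta> k)" for F c \<beta>
  proof -
    have "\<beta> \<in> Phi_pos"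
      using F(2,3) by auto
    then obtain a b where ab: "1 \<le> a" "a < b" "\<beta> = eps_diff a b"
      unfolding Phi_pos_eq by blast
    have "odd a" "odd b"
      using F(2,3) ab sref_eps_diff_in_GX_iff by auto
    have support: "beta i k > 0" if "\<beta> k > 0" for k
      using pos_comb_support[OF F(1,2) _ F(5) that] F(3,4) by (auto simp: Phi_pos_def)
    have beta_pos: "beta i k > 0 \<longleftrightarrow> 2*i - 1 \<le> k \<and> k < 2*i + 1" for k
      using i by (simp add: beta_eq_eps_diff eps_diff_def eps_def)
    have "\<beta> a > 0" "\<beta> (b - 1) > 0"
      using ab by (auto simp: eps_diff_def eps_def)
    then have "2*i - 1 \<le> a" "b - 1 < 2*i + 1"
      using support beta_pos by blast+
    then have "a = 2*i - 1" "b = 2*i + 1"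
      using \<open>odd a\<close> \<open>odd b\<close> ab i by presburger+
    then show ?thesis
      using ab i by (simp add: beta_eq_eps_diff)
  qed
  then show ?thesis
    unfolding Pi_of_def using beta_Phi_pos[OF i] sref_beta_in_GX[OF i] by blast
qed

lemma eps_diff_long_notin_Pi_of_GX:
  assumes "1 \<le> a" "odd a" "odd c" "a + 2 < c"
  shows "eps_diff a c \<notin> Pi_of GX"
proof -
  let ?\<gamma> = "eps_diff a c"
  define F where "F = {eps_diff a (a + 2), eps_diff (a + 2) c}"
  have "eps_diff a (a + 2) a = 1" "eps_diff (a + 2) c a = 0" "?\<gamma> a = 1"
      "eps_diff a (a + 2) (a + 2) = 0" "?\<gamma> (a + 2) = 1"
    using assms by (simp_all add: eps_diff_def eps_def)
  then have ne: "eps_diff a (a + 2) \<noteq> eps_diff (a + 2) c" "eps_diff a (a + 2) \<noteq> ?\<gamma>"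
      "eps_diff (a + 2) c \<noteq> ?\<gamma>"
    by (metis zero_neq_one)+
  have "eps_diff a (a + 2) \<in> Phi_pos" "eps_diff (a + 2) c \<in> Phi_pos"
    using assms by (simp_all add: eps_diff_in_Phi_pos)
  moreover have "sref (eps_diff a (a + 2)) \<in> GX" "sref (eps_diff (a + 2) c) \<in> GX"
    using assms by (simp_all add: sref_eps_diff_in_GX_iff)
  ultimately have "F \<subseteq> {\<beta> \<in> Phi_pos. sref \<beta> \<in> GX \<and> \<beta> \<noteq> ?\<gamma>}"
    using ne by (auto simp: F_def)
  moreover have "\<forall>k. ?\<gamma> k = (\<Sum>\<beta>\<in>F. 1 * \<beta> k)"
    using ne assms by (simp add: F_def eps_diff_def)
  ultimately show ?thesis
    unfolding Pi_of_def
    by (auto intro!: exI[of _ F] exI[of _ "\<lambda>_. 1 :: real"] simp: F_def)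
qed

lemma Pi_of_GX: "Pi_of GX = {beta i | i. i \<ge> 1}"
proof (intro equalityI subsetI)
  fix \<gamma> assume \<gamma>: "\<gamma> \<in> Pi_of GX"
  then have "\<gamma> \<in> Phi_pos" "sref \<gamma> \<in> GX"
    by (auto simp: Pi_of_def)
  then obtain a c where ac: "1 \<le> a" "a < c" "\<gamma> = eps_diff a c" "odd a" "odd c"
    unfolding Phi_pos_eq using sref_eps_diff_in_GX_iff by auto
  have "c = a + 2"
  proof (rule ccontr)
    assume "c \<noteq> a + 2"
    then have "a + 2 < c"
      using ac by presburger
    then show False
      using eps_diff_long_notin_Pi_of_GX[of a c] \<gamma> ac by simp
  qed
  then have "\<gamma> = beta ((a + 1) div 2)" "(a + 1) div 2 \<ge> 1"
    using ac by (auto simp: beta_eq_eps_diff elim!: oddE)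
  then show "\<gamma> \<in> {beta i | i. i \<ge> 1}"
    by blast
qed (auto simp: beta_in_Pi_of_GX)

lemma S_of_GX: "S_of GX = Xset"
  unfolding S_of_def Pi_of_GX by (auto simp: Xset_def)

section \<open>Parabolic subgroups containing \<open>G\<close>\<close>

lemma conj_genW:
  assumes w: "w \<in> Wset" and A: "A \<subseteq> Wset"
  shows "{w \<circ> u \<circ> inv\<^bsub>Wgrp\<^esub> w | u. u \<in> genW A} = genW ((\<lambda>u. w \<circ> u \<circ> inv\<^bsub>Wgrp\<^esub> w) ` A)"
proof -
  interpret W: group Wgrp
    by (rule group_Wgrp)
  have "group_hom Wgrp Wgrp (\<lambda>u. w \<circ> u \<circ> inv\<^bsub>Wgrp\<^esub> w)"
  proof (unfold_locales, rule homI)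
    fix x y assume "x \<in> carrier Wgrp" "y \<in> carrier Wgrp"
    then show "w \<circ> x \<circ> inv\<^bsub>Wgrp\<^esub> w \<in> carrier Wgrp"
      using w W_inv(1)[OF w] W_comp_closed by simp
    have "w \<circ> (x \<circ> y) \<circ> inv\<^bsub>Wgrp\<^esub> w = w \<circ> x \<circ> (inv\<^bsub>Wgrp\<^esub> w \<circ> w) \<circ> y \<circ> inv\<^bsub>Wgrp\<^esub> w"
      using W_inv(2)[OF w] by (simp add: comp_assoc)
    then show "w \<circ> (x \<otimes>\<^bsub>Wgrp\<^esub> y) \<circ> inv\<^bsub>Wgrp\<^esub> w =
        (w \<circ> x \<circ> inv\<^bsub>Wgrp\<^esub> w) \<otimes>\<^bsub>Wgrp\<^esub> (w \<circ> y \<circ> inv\<^bsub>Wgrp\<^esub> w)"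
      by (simp add: comp_assoc)
  qed
  then show ?thesis
    using group_hom.generate_img A by (fastforce simp: genW_def)
qed

lemma parabolic_subgroup: "parabolic H \<Longrightarrow> subgroup H Wgrp"
proof -
  assume "parabolic H"
  then obtain w I where wI: "w \<in> Wset" "I \<subseteq> Sgen" "H = {w \<circ> u \<circ> inv\<^bsub>Wgrp\<^esub> w | u. u \<in> genW I}"
    unfolding parabolic_def by blast
  have I: "I \<subseteq> Wset"
    using wI(2) Sgen_subset_W by blast
  then have "(\<lambda>u. w \<circ> u \<circ> inv\<^bsub>Wgrp\<^esub> w) ` I \<subseteq> Wset"
    using wI(1) W_inv W_comp_closed by auto
  then show ?thesis
    using wI(3) conj_genW[OF wI(1) I] subgroup_genW by simp
qed

lemma inv_perm_act:
  assumes "p permutes {1..n}"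
  shows "inv\<^bsub>Wgrp\<^esub> (perm_act p) = perm_act (Hilbert_Choice.inv p)"
proof (rule W_inv_eqI)
  show "perm_act p \<in> Wset" "perm_act (Hilbert_Choice.inv p) \<in> Wset"
    using perm_act_in_W permutes_inv assms by blast+
  show "perm_act (Hilbert_Choice.inv p) \<circ> perm_act p = id"
    using perm_act_comp[OF pos_preserving_permutes[OF permutes_inv[OF assms]], of p]
      permutes_inv_o(1)[OF assms] by (simp add: perm_act_id)
qed

lemma conj_s_by_perm_act:
  assumes p: "p permutes {1..n}" and k: "k \<ge> 1"
  shows "perm_act (Hilbert_Choice.inv p) \<circ> s k \<circ> inv\<^bsub>Wgrp\<^esub> (perm_act (Hilbert_Choice.inv p)) =
    perm_act (transpose (p k) (p (Suc k)))"
proof -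
  have ip: "Hilbert_Choice.inv p permutes {1..n}"
    by (rule permutes_inv[OF p])
  have "transpose (p k) (p (Suc k)) \<circ> p = p \<circ> transpose k (Suc k)"
    using transpose_comp_eq[OF permutes_bij[OF p]] permutes_inverses(2)[OF p] by simp
  then have "p \<circ> transpose k (Suc k) \<circ> Hilbert_Choice.inv p =
      transpose (p k) (p (Suc k)) \<circ> (p \<circ> Hilbert_Choice.inv p)"
    by (simp flip: comp_assoc)
  then have "p \<circ> transpose k (Suc k) \<circ> Hilbert_Choice.inv p = transpose (p k) (p (Suc k))"
    using permutes_inv_o(1)[OF p] by simp
  moreover have "inv\<^bsub>Wgrp\<^esub> (perm_act (Hilbert_Choice.inv p)) = perm_act p"
    using inv_perm_act[OF ip] permutes_inv_inv[OF p] by simp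
  moreover have "perm_act (p \<circ> transpose k (Suc k) \<circ> Hilbert_Choice.inv p) =
      perm_act (Hilbert_Choice.inv p) \<circ> s k \<circ> perm_act p"
    using perm_act_comp[OF pos_preserving_permutes[OF ip], of "p \<circ> transpose k (Suc k)"]
      perm_act_comp[OF pos_preserving_transpose[of k "Suc k"], of p] k
    by (simp add: s_eq_perm_act comp_assoc)
  ultimately show ?thesis
    by simp
qed

definition interleave :: "nat \<Rightarrow> nat \<Rightarrow> nat" where
  "interleave i x =
    (if i < x \<and> x \<le> 2*i then 2*(x - i) - 1 else if 1 \<le> x \<and> x \<le> i then 2*x else x)"

lemma interleave_permutes: "interleave i permutes {1..2*i}"
proof (rule inj_imp_permutes)
  show "inj_on (interleave i) {1..2*i}"
  proof (rule inj_onI)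
    fix x y assume "x \<in> {1..2*i}" "y \<in> {1..2*i}" "interleave i x = interleave i y"
    then show "x = y"
      unfolding interleave_def by (auto split: if_splits) presburger+
  qed
qed (auto simp: interleave_def)

definition Gsub_gens :: "nat \<Rightarrow> lmap set" where
  "Gsub_gens i = {sref (beta j) | j. 1 \<le> j \<and> j \<le> i} \<union> {s k | k. k \<ge> 2*i + 1}"

lemma Gsub_eq: "Gsub i = genW (Gsub_gens i)"
  by (simp add: Gsub_def Gsub_gens_def)

lemma conj_s_by_interleave:
  assumes "k \<ge> i + 1"
  defines "w \<equiv> perm_act (Hilbert_Choice.inv (interleave i))"
  shows "w \<circ> s k \<circ> inv\<^bsub>Wgrp\<^esub> w = (if k \<le> 2*i then sref (beta (k - i)) else s k)"
proof (cases "k \<le> 2*i")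
  case True
  then have "interleave i k = 2*(k - i) - 1" "interleave i (Suc k) = 2*(k - i) + 1"
    using assms(1) by (auto simp: interleave_def)
  then show ?thesis
    using assms(1) True conj_s_by_perm_act[OF interleave_permutes, of k i]
    by (simp add: w_def sref_beta tbeta_def)
next
  case False
  then have "interleave i k = k" "interleave i (Suc k) = Suc k"
    by (auto simp: interleave_def)
  then show ?thesis
    using assms(1) False conj_s_by_perm_act[OF interleave_permutes, of k i]
    by (simp add: w_def s_eq_perm_act)
qed

lemma Gsub_gens_conj:
  fixes i :: nat
  defines "w \<equiv> perm_act (Hilbert_Choice.inv (interleave i))"
  shows "(\<lambda>u. w \<circ> u \<circ> inv\<^bsub>Wgrp\<^esub> w) ` {s k | k. k \<ge> i + 1} = Gsub_gens i"
proof (intro equalityI subsetI)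
  fix x assume "x \<in> (\<lambda>u. w \<circ> u \<circ> inv\<^bsub>Wgrp\<^esub> w) ` {s k | k. k \<ge> i + 1}"
  then obtain k where k: "k \<ge> i + 1" "x = w \<circ> s k \<circ> inv\<^bsub>Wgrp\<^esub> w"
    by blast
  show "x \<in> Gsub_gens i"
  proof (cases "k \<le> 2*i")
    case True
    then have "x = sref (beta (k - i))" "1 \<le> k - i" "k - i \<le> i"
      using k conj_s_by_interleave[of i k] by (auto simp: w_def)
    then show ?thesis
      unfolding Gsub_gens_def by blast
  next
    case False
    then show ?thesis
      using k conj_s_by_interleave[of i k] unfolding Gsub_gens_def w_def by auto
  qed
next
  fix x assume "x \<in> Gsub_gens i"
  then consider j where "1 \<le> j" "j \<le> i" "x = sref (beta j)" | k where "k \<ge> 2*i + 1" "x = s k"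
    unfolding Gsub_gens_def by blast
  then show "x \<in> (\<lambda>u. w \<circ> u \<circ> inv\<^bsub>Wgrp\<^esub> w) ` {s k | k. k \<ge> i + 1}"
  proof cases
    case 1
    moreover have "s (j + i) \<in> {s k | k. k \<ge> i + 1}"
      using 1 by auto
    ultimately show ?thesis
      using conj_s_by_interleave[of i "j + i"] unfolding w_def
      by (simp add: image_iff) (metis add_diff_cancel_right')
  next
    case 2
    then have "s k \<in> {s k | k. k \<ge> i + 1}"
      by auto
    then show ?thesis
      using 2 conj_s_by_interleave[of i k] unfolding w_def
      by (simp add: image_iff) (metis not_less_eq_eq)
  qed
qed

lemma Gsub_parabolic:
  assumes "i \<ge> 1"
  shows "parabolic (Gsub i)"
proof -
  define w where "w = perm_act (Hilbert_Choice.inv (interleave i))"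
  have w: "w \<in> Wset"
    unfolding w_def using perm_act_in_W[OF permutes_inv[OF interleave_permutes]] .
  have I: "{s k | k. k \<ge> i + 1} \<subseteq> Sgen"
    unfolding Sgen_def by auto
  have "{w \<circ> u \<circ> inv\<^bsub>Wgrp\<^esub> w | u. u \<in> genW {s k | k. k \<ge> i + 1}} = Gsub i"
    using conj_genW[OF w order.trans[OF I Sgen_subset_W]] Gsub_gens_conj[of i]
    by (simp add: Gsub_eq w_def)
  then show ?thesis
    unfolding parabolic_def using w I by blast
qed

lemma sref_beta_eq_s_conj: "j \<ge> 1 \<Longrightarrow> sref (beta j) = s (2*j - 1) \<circ> s (2*j) \<circ> s (2*j - 1)"
  using transpose_comp_triple[of "2*j - 1" "2*j + 1" "2*j"]
    perm_act_comp[OF pos_preserving_transpose[of "2*j - 1" "2*j"],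
      of "transpose (2*j - 1) (2*j) \<circ> transpose (2*j) (2*j + 1)"]
    perm_act_comp[OF pos_preserving_transpose[of "2*j" "2*j + 1"], of "transpose (2*j - 1) (2*j)"]
  by (simp add: sref_beta tbeta_def s_eq_perm_act transpose_commute comp_assoc)

lemma Gsub_gens_subset_W: "Gsub_gens i \<subseteq> Wset"
  using sref_beta_in_W s_in_W by (auto simp: Gsub_gens_def)

lemma subgroup_Gsub: "subgroup (Gsub i) Wgrp"
  unfolding Gsub_eq by (rule subgroup_genW[OF Gsub_gens_subset_W])

lemma sref_beta_in_Gsub: "j \<ge> 1 \<Longrightarrow> j \<le> i \<or> 2*j - 1 \<ge> 2*i + 1 \<Longrightarrow> sref (beta j) \<in> Gsub i"
proof (elim disjE)
  assume "j \<ge> 1" "j \<le> i"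
  then show ?thesis
    unfolding Gsub_eq Gsub_gens_def by (blast intro: subsetD[OF genW_incl])
next
  assume j: "j \<ge> 1" "2*j - 1 \<ge> 2*i + 1"
  then have "s (2*j - 1) \<in> Gsub i" "s (2*j) \<in> Gsub i"
    unfolding Gsub_eq Gsub_gens_def by (auto intro!: subsetD[OF genW_incl])
  then show ?thesis
    unfolding sref_beta_eq_s_conj[OF j(1)] Gsub_eq by (intro genW_comp_closed)
qed

lemma Gsub_gens_subset_Gsub: "Gsub_gens i \<subseteq> Gsub i"
  unfolding Gsub_eq by (rule genW_incl)

lemma GX_subset_Gsub: "GX \<subseteq> Gsub i"
proof (rule genW_minimal[OF _ subgroup_Gsub], rule subsetI)
  fix x assume "x \<in> Xset"
  then obtain j where "j \<ge> 1" "x = sref (beta j)"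
    by (auto simp: Xset_def)
  moreover have "j \<le> i \<or> 2*j - 1 \<ge> 2*i + 1"
    by arith
  ultimately show "x \<in> Gsub i"
    using sref_beta_in_Gsub by blast
qed

lemma Gsub_Suc_subset: "Gsub (i + 1) \<subseteq> Gsub i"
proof -
  have "x \<in> Gsub i" if "x \<in> Gsub_gens (i + 1)" for x
  proof -
    from that consider j where "1 \<le> j" "j \<le> i + 1" "x = sref (beta j)"
      | k where "k \<ge> 2*(i + 1) + 1" "x = s k"
      unfolding Gsub_gens_def by blast
    then show ?thesis
    proof cases
      case 1
      then show ?thesis
        using sref_beta_in_Gsub[of j i] by (cases "j \<le> i") auto
    next
      case 2
      then have "x \<in> Gsub_gens i"
        unfolding Gsub_gens_def by auto
      then show ?thesis
        using Gsub_gens_subset_Gsub by blast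
    qed
  qed
  then have "genW (Gsub_gens (i + 1)) \<subseteq> Gsub i"
    by (intro genW_minimal[OF _ subgroup_Gsub]) blast
  then show ?thesis
    unfolding Gsub_eq[of "i + 1"] .
qed

lemma Gsub_fixes_even_eps:
  assumes "g \<in> Gsub i" "even k" "2 \<le> k" "k \<le> 2*i"
  shows "g (eps k) = eps k"
proof (rule genW_fixes[OF Gsub_gens_subset_W _ assms(1)[unfolded Gsub_eq]])
  fix a assume "a \<in> Gsub_gens i"
  then consider j where "1 \<le> j" "a = perm_act (transpose (2*j - 1) (2*j + 1))"
    | m where "m \<ge> 2*i + 1" "a = perm_act (transpose m (Suc m))"
    unfolding Gsub_gens_def using sref_beta s_eq_perm_act by (auto simp: tbeta_def)
  then show "a (eps k) = eps k"
  proof cases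
    case 1
    moreover have "k \<noteq> 2*j - 1" "k \<noteq> 2*j + 1"
      using assms(2) 1 by presburger+
    ultimately show ?thesis
      using assms(3) by (simp add: perm_act_transpose_eps)
  next
    case 2
    then show ?thesis
      using assms(3,4) by (simp add: perm_act_transpose_eps)
  qed
qed

lemma Gsub_strict_mono: "i \<ge> 1 \<Longrightarrow> Gsub (i + 1) \<subset> Gsub i"
proof -
  have "s (2*i + 1) \<in> Gsub i"
    unfolding Gsub_eq Gsub_gens_def by (blast intro: subsetD[OF genW_incl])
  moreover have "s (2*i + 1) (eps (2*i + 2)) = eps (2*i + 1)"
    by (simp add: s_eq_perm_act perm_act_transpose_eps)
  then have "s (2*i + 1) (eps (2*i + 2)) \<noteq> eps (2*i + 2)"
    using eps_inj[of "2*i + 1" "2*i + 2"] by fastforce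
  then have "s (2*i + 1) \<notin> Gsub (i + 1)"
    using Gsub_fixes_even_eps[of _ "i + 1" "2*i + 2"] by auto
  ultimately show ?thesis
    using Gsub_Suc_subset by blast
qed

lemma Inter_Gsub: "\<Inter>{Gsub i | i. i \<ge> 1} = GX"
proof
  show "GX \<subseteq> \<Inter>{Gsub i | i. i \<ge> 1}"
    using GX_subset_Gsub by blast
next
  show "\<Inter>{Gsub i | i. i \<ge> 1} \<subseteq> GX"
  proof
    fix g assume "g \<in> \<Inter>{Gsub i | i. i \<ge> 1}"
    then have g: "g \<in> Gsub i" if "i \<ge> 1" for i
      using that by blast
    have "g \<in> Wset"
      using g[of 1] subgroup.subset[OF subgroup_Gsub] by auto
    moreover obtain N where N: "\<forall>k>N. g (eps k) = eps k"
      using W_fixes_large_eps[OF \<open>g \<in> Wset\<close>] by blast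
    have "g (eps k) = eps k" if "even k" "k \<ge> 2" for k
      using N g[of "max N 1"] Gsub_fixes_even_eps[of g "max N 1" k] that
      by (cases "k > N") auto
    ultimately show "g \<in> GX"
      unfolding GX_eq_even_stabilizer by blast
  qed
qed

section \<open>\<open>G\<close> is not parabolic, but is the parabolic closure of \<open>X\<close>\<close>

lemma conj_eps_beyond_support:
  assumes w: "w \<in> Wset" "\<forall>k>N. w (eps k) = eps k"
    and u: "u (eps m) = eps m'" "m > N" "m' > N"
  shows "(w \<circ> u \<circ> inv\<^bsub>Wgrp\<^esub> w) (eps m) = eps m'"
proof -
  have "(inv\<^bsub>Wgrp\<^esub> w) (eps m) = (inv\<^bsub>Wgrp\<^esub> w) (w (eps m))"
    using w(2) u(2) by simp
  also have "\<dots> = eps m"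
    using W_inv(2)[OF w(1)] by (metis comp_apply id_apply)
  finally show ?thesis
    using w(2) u by simp
qed

lemma sref_beta_moves_eps: "j \<ge> 1 \<Longrightarrow> sref (beta j) (eps (2*j - 1)) = eps (2*j + 1)"
  by (simp add: sref_beta tbeta_def perm_act_transpose_eps)

lemma conj_large_s_notin_GX:
  assumes w: "w \<in> Wset" "\<forall>k>N. w (eps k) = eps k" and k: "k \<ge> 1" "k > N"
  shows "w \<circ> s k \<circ> inv\<^bsub>Wgrp\<^esub> w \<notin> GX"
proof
  assume G: "w \<circ> s k \<circ> inv\<^bsub>Wgrp\<^esub> w \<in> GX"
  define m where "m = (if even k then k else Suc k)"
  define m' where "m' = (if even k then Suc k else k)"
  have m: "even m" "m \<ge> 2" "m > N" "m' > N" "m' \<ge> 1" "m \<noteq> m'"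
    using k unfolding m_def m'_def by (cases "even k"; simp; presburger)+
  have "s k (eps m) = eps m'"
    using k by (auto simp: m_def m'_def s_eq_perm_act perm_act_transpose_eps)
  then have "(w \<circ> s k \<circ> inv\<^bsub>Wgrp\<^esub> w) (eps m) = eps m'"
    using conj_eps_beyond_support[OF w] m by simp
  then have "eps m' = eps m"
    using G m unfolding GX_eq_even_stabilizer by auto
  then show False
    using eps_inj m by force
qed

lemma not_parabolic_GX: "\<not> parabolic GX"
proof
  assume "parabolic GX"
  then obtain w I where wI: "w \<in> Wset" "I \<subseteq> Sgen" "GX = {w \<circ> u \<circ> inv\<^bsub>Wgrp\<^esub> w | u. u \<in> genW I}"
    unfolding parabolic_def by blast
  obtain N where N: "\<forall>k>N. w (eps k) = eps k"
    using W_fixes_large_eps[OF wI(1)] by blast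
  have small: "k \<le> N" if "s k \<in> I" "k \<ge> 1" for k
  proof (rule ccontr)
    assume "\<not> k \<le> N"
    moreover have "w \<circ> s k \<circ> inv\<^bsub>Wgrp\<^esub> w \<in> GX"
      unfolding wI(3) using that genW_incl by blast
    ultimately show False
      using conj_large_s_notin_GX[OF wI(1) N that(2)] by simp
  qed
  define j where "j = N + 2"
  have "x (eps (2*j - 1)) = eps (2*j - 1)" if "x \<in> genW I" for x
  proof (rule genW_fixes[OF order.trans[OF wI(2) Sgen_subset_W] _ that])
    fix a assume "a \<in> I"
    then obtain k where "1 \<le> k" "a = s k" "k \<le> N"
      using small wI(2) by (auto simp: Sgen_def)
    then show "a (eps (2*j - 1)) = eps (2*j - 1)"
      by (simp add: j_def s_eq_perm_act perm_act_transpose_eps)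
  qed
  then have "g (eps (2*j - 1)) = eps (2*j - 1)" if "g \<in> GX" for g
    using that conj_eps_beyond_support[OF wI(1) N] unfolding wI(3) by (auto simp: j_def)
  then show False
    using sref_beta_in_GX[of j] sref_beta_moves_eps[of j] eps_inj[of "2*j - 1" "2*j + 1"]
    by (simp add: j_def)
qed

lemma parabolic_closure_Xset: "parabolic_closure Xset = GX"
proof
  have "Xset \<subseteq> Gsub i" for i
    using GX_subset_Gsub genW_incl by blast
  then have "parabolic_closure Xset \<subseteq> \<Inter>{Gsub i | i. i \<ge> 1}"
    unfolding parabolic_closure_def using Gsub_parabolic by blast
  then show "parabolic_closure Xset \<subseteq> GX"
    using Inter_Gsub by simp
next
  show "GX \<subseteq> parabolic_closure Xset"
    unfolding parabolic_closure_def using genW_minimal parabolic_subgroup by blast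
qed

theorem mainTheorem8:
  shows "S_of (genW Xset) = Xset \<and>
    coxeter_system_A_inf TYPE('h) (Wgrp\<lparr>carrier := genW Xset\<rparr>) Xset \<and>
    \<not> parabolic (genW Xset) \<and>
    (\<forall>i\<ge>1. parabolic (Gsub i) \<and> genW Xset \<subseteq> Gsub i) \<and>
    (\<forall>i\<ge>1. Gsub (i + 1) \<subset> Gsub i) \<and>
    \<Inter>{Gsub i | i. i \<ge> 1} = genW Xset \<and>
    parabolic_closure Xset = genW Xset \<and>
    \<not> parabolic (parabolic_closure Xset)"
  using S_of_GX coxeter_system_A_inf_GX not_parabolic_GX Gsub_parabolic GX_subset_Gsub
    Gsub_strict_mono Inter_Gsub parabolic_closure_Xset
  by simp

end
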